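(* Let $G$ be a group, $\mathcal H$ a complex separable Hilbert space and $V\colon G\to\mathcal U(\mathcal H)$ a unitary representation which decomposes as a direct sum $V=V_1\oplus V_2$ on $\mathcal H=\mathcal H_1\oplus\mathcal H_2$ of two equivalent irreducible representations. Let $T\colon\mathcal D(T)\subset\mathcal H\to\mathcal H$ be a densely defined self-adjoint operator which is $G$-invariant with respect to $V$. Then $T$ is bounded.
   Context: $T$ is $G$-invariant if $V(g)\mathcal D(T)\subset\mathcal D(T)$ and $TV(g)\Psi=V(g)T\Psi$ for all $g\in G$, $\Psi\in\mathcal D(T)$. *)

theory Defs
  imports "HOL-Analysis.Analysis" "HOL-Algebra.Group"
begin

class chilbert = banach +
  fixes scaleC :: "complex \<Rightarrow> 'a \<Rightarrow> 'a"
    and cinner :: "'a \<Rightarrow> 'a \<Rightarrow> complex"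
  assumes scaleC_add_right: "scaleC a (x + y) = scaleC a x + scaleC a y"
    and scaleC_add_left: "scaleC (a + b) x = scaleC a x + scaleC b x"
    and scaleC_scaleC: "scaleC a (scaleC b x) = scaleC (a * b) x"
    and scaleC_one: "scaleC 1 x = x"
    and scaleR_scaleC: "scaleR r x = scaleC (complex_of_real r) x"
    and cinner_cnj_commute: "cinner x y = cnj (cinner y x)"
    and cinner_add_right: "cinner x (y + z) = cinner x y + cinner x z"
    and cinner_scaleC_right: "cinner x (scaleC a y) = a * cinner x y"
    and cinner_self_nonneg: "0 \<le> Re (cinner x x)"
    and cinner_self_eq_0: "cinner x x = 0 \<longleftrightarrow> x = 0"
    and norm_eq_sqrt_cinner: "norm x = sqrt (Re (cinner x x))"

definition csubspace :: "'a::chilbert set \<Rightarrow> bool" where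
  "csubspace S \<longleftrightarrow> 0 \<in> S \<and> (\<forall>x\<in>S. \<forall>y\<in>S. x + y \<in> S) \<and> (\<forall>c. \<forall>x\<in>S. scaleC c x \<in> S)"

definition closed_csubspace :: "'a::chilbert set \<Rightarrow> bool" where
  "closed_csubspace S \<longleftrightarrow> csubspace S \<and> closed S"

definition clinear_on :: "'a::chilbert set \<Rightarrow> ('a \<Rightarrow> 'b::chilbert) \<Rightarrow> bool" where
  "clinear_on S f \<longleftrightarrow> (\<forall>x\<in>S. \<forall>y\<in>S. f (x + y) = f x + f y) \<and> (\<forall>c. \<forall>x\<in>S. f (scaleC c x) = scaleC c (f x))"

definition unitary_op :: "('a::chilbert \<Rightarrow> 'a) \<Rightarrow> bool" where
  "unitary_op U \<longleftrightarrow> clinear_on UNIV U \<and> surj U \<and> (\<forall>x y. cinner (U x) (U y) = cinner x y)"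

definition unitary_rep :: "('g, 'c) monoid_scheme \<Rightarrow> ('g \<Rightarrow> 'a::chilbert \<Rightarrow> 'a) \<Rightarrow> bool" where
  "unitary_rep G V \<longleftrightarrow> group G \<and> (\<forall>g\<in>carrier G. unitary_op (V g))
     \<and> (\<forall>g\<in>carrier G. \<forall>h\<in>carrier G. V (g \<otimes>\<^bsub>G\<^esub> h) = V g \<circ> V h)
     \<and> V \<one>\<^bsub>G\<^esub> = id"

definition rep_invariant :: "('g, 'c) monoid_scheme \<Rightarrow> ('g \<Rightarrow> 'a::chilbert \<Rightarrow> 'a) \<Rightarrow> 'a set \<Rightarrow> bool" where
  "rep_invariant G V K \<longleftrightarrow> (\<forall>g\<in>carrier G. V g ` K \<subseteq> K)"

definition irreducible_subrep :: "('g, 'c) monoid_scheme \<Rightarrow> ('g \<Rightarrow> 'a::chilbert \<Rightarrow> 'a) \<Rightarrow> 'a set \<Rightarrow> bool" where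
  "irreducible_subrep G V K \<longleftrightarrow> closed_csubspace K \<and> rep_invariant G V K \<and> K \<noteq> {0}
     \<and> (\<forall>K'. closed_csubspace K' \<and> K' \<subseteq> K \<and> rep_invariant G V K' \<longrightarrow> K' = {0} \<or> K' = K)"

definition equivalent_subreps :: "('g, 'c) monoid_scheme \<Rightarrow> ('g \<Rightarrow> 'a::chilbert \<Rightarrow> 'a) \<Rightarrow> 'a set \<Rightarrow> 'a set \<Rightarrow> bool" where
  "equivalent_subreps G V K1 K2 \<longleftrightarrow> (\<exists>W. bij_betw W K1 K2 \<and> clinear_on K1 W
     \<and> (\<forall>x\<in>K1. \<forall>y\<in>K1. cinner (W x) (W y) = cinner x y)
     \<and> (\<forall>g\<in>carrier G. \<forall>x\<in>K1. W (V g x) = V g (W x)))"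

text \<open>\<open>H = H1 \<oplus> H2\<close> as an orthogonal direct sum of closed subspaces, each invariant
under \<open>V\<close>, so that \<open>V = V1 \<oplus> V2\<close>.\<close>
definition orth_decomposition :: "('g, 'c) monoid_scheme \<Rightarrow> ('g \<Rightarrow> 'a::chilbert \<Rightarrow> 'a) \<Rightarrow> 'a set \<Rightarrow> 'a set \<Rightarrow> bool" where
  "orth_decomposition G V H1 H2 \<longleftrightarrow> closed_csubspace H1 \<and> closed_csubspace H2
     \<and> (\<forall>x\<in>H1. \<forall>y\<in>H2. cinner x y = 0)
     \<and> {x + y | x y. x \<in> H1 \<and> y \<in> H2} = UNIV
     \<and> rep_invariant G V H1 \<and> rep_invariant G V H2"

text \<open>A densely defined (linear) operator \<open>T\<close> with domain \<open>D\<close>; the values of \<open>T\<close>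
outside \<open>D\<close> are irrelevant.\<close>
definition densely_defined :: "'a::chilbert set \<Rightarrow> ('a \<Rightarrow> 'a) \<Rightarrow> bool" where
  "densely_defined D T \<longleftrightarrow> csubspace D \<and> clinear_on D T \<and> closure D = UNIV"

definition adjoint_domain :: "'a::chilbert set \<Rightarrow> ('a \<Rightarrow> 'a) \<Rightarrow> 'a set" where
  "adjoint_domain D T = {y. \<exists>z. \<forall>x\<in>D. cinner (T x) y = cinner x z}"

text \<open>Self-adjointness \<open>T = T*\<close>: equal domains and \<open>T* y = T y\<close> on the domain
(for densely defined \<open>T\<close>, \<open>T* y\<close> is the unique \<open>z\<close> with \<open>\<langle>T x, y\<rangle> = \<langle>x, z\<rangle>\<close>).\<close>
definition self_adjoint :: "'a::chilbert set \<Rightarrow> ('a \<Rightarrow> 'a) \<Rightarrow> bool" where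
  "self_adjoint D T \<longleftrightarrow> adjoint_domain D T = D \<and> (\<forall>x\<in>D. \<forall>y\<in>D. cinner (T x) y = cinner x (T y))"

definition G_invariant :: "('g, 'c) monoid_scheme \<Rightarrow> ('g \<Rightarrow> 'a::chilbert \<Rightarrow> 'a) \<Rightarrow> 'a set \<Rightarrow> ('a \<Rightarrow> 'a) \<Rightarrow> bool" where
  "G_invariant G V D T \<longleftrightarrow> (\<forall>g\<in>carrier G. V g ` D \<subseteq> D \<and> (\<forall>\<Psi>\<in>D. T (V g \<Psi>) = V g (T \<Psi>)))"

definition bounded_op :: "'a::chilbert set \<Rightarrow> ('a \<Rightarrow> 'a) \<Rightarrow> bool" where
  "bounded_op D T \<longleftrightarrow> (\<exists>C. \<forall>x\<in>D. norm (T x) \<le> C * norm x)"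

end

theory Submission
  imports Defs "HOL-Computational_Algebra.Formal_Power_Series"
begin

text \<open>The operator \<open>A = (T - i)\<^sup>-\<^sup>1 (T + i)\<^sup>-\<^sup>1 = (1 + T\<^sup>2)\<^sup>-\<^sup>1\<close> is bounded, hermitian, injective
and commutes with \<open>V\<close>. By Schur's lemma every bounded operator commuting with \<open>V\<close> acts on
\<open>H\<^sub>1 \<oplus> H\<^sub>2 \<cong> H\<^sub>1 \<otimes> \<complex>\<^sup>2\<close> as a scalar \<open>2 \<times> 2\<close> matrix, so by Cayley-Hamilton \<open>A\<^sup>2 = s A - q\<close>.
An injective operator satisfying such a quadratic relation is bounded below, hence
\<open>\<parallel>T x\<parallel> \<le> \<parallel>(T + i) x\<parallel> \<le> K \<parallel>A (T + i) x\<parallel> \<le> K \<parallel>x\<parallel>\<close>.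
Schur's lemma for a hermitian operator \<open>D\<close> is proved without spectral theory: the positive
square root \<open>\<bar>D\<bar>\<close> of \<open>D\<^sup>2\<close>, built from the binomial series of \<open>\<surd>(1 - t)\<close>, gives the
invariant subspace \<open>ker (\<bar>D\<bar> - D)\<close>, which contains the range of \<open>\<bar>D\<bar> + D\<close>; irreducibility
then forces \<open>D \<ge> 0\<close> or \<open>D \<le> 0\<close>, and applied to \<open>D - r\<close> for all real \<open>r\<close> this makes the
quadratic form of \<open>D\<close> a multiple of the norm.\<close>

section \<open>Complex inner product spaces\<close>

lemma cinner_add_left: "cinner (x + y) z = cinner x z + cinner (y::'a::chilbert) z"
  by (metis cinner_cnj_commute cinner_add_right complex_cnj_add)

lemma cinner_scaleC_left: "cinner (scaleC a x) (y::'a::chilbert) = cnj a * cinner x y"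
  by (metis cinner_cnj_commute cinner_scaleC_right complex_cnj_mult)

lemma scaleC_zero_right [simp]: "scaleC a (0::'a::chilbert) = 0"
  using scaleC_add_right[of a 0 0] by simp

lemma scaleC_zero_left [simp]: "scaleC 0 (x::'a::chilbert) = 0"
  using scaleC_add_left[of 0 0 x] by simp

lemma scaleC_minus1: "scaleC (-1) (x::'a::chilbert) = - x"
  using scaleR_scaleC[of "-1" x] by simp

lemma scaleC_diff_right: "scaleC a (x - y) = scaleC a x - scaleC a (y::'a::chilbert)"
  using scaleC_add_right[of a "x - y" y] by (simp add: eq_diff_eq)

lemma scaleC_diff_left: "scaleC (a - b) x = scaleC a x - scaleC b (x::'a::chilbert)"
  using scaleC_add_left[of "a - b" b x] by (simp add: eq_diff_eq)

lemma cinner_zero_left [simp]: "cinner 0 (y::'a::chilbert) = 0"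
  using cinner_add_left[of 0 0 y] by simp

lemma cinner_zero_right [simp]: "cinner y (0::'a::chilbert) = 0"
  using cinner_add_right[of y 0 0] by simp

lemma cinner_minus_left: "cinner (- x) (y::'a::chilbert) = - cinner x y"
  using cinner_add_left[of x "- x" y] by (simp add: eq_neg_iff_add_eq_0 add.commute)

lemma cinner_minus_right: "cinner y (- x) = - cinner (y::'a::chilbert) x"
  using cinner_add_right[of y x "- x"] by (simp add: eq_neg_iff_add_eq_0 add.commute)

lemma cinner_diff_left: "cinner (x - y) (z::'a::chilbert) = cinner x z - cinner y z"
  by (simp only: diff_conv_add_uminus cinner_add_left cinner_minus_left)

lemma cinner_diff_right: "cinner z (x - y) = cinner (z::'a::chilbert) x - cinner z y"
  by (simp only: diff_conv_add_uminus cinner_add_right cinner_minus_right)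

lemma cinner_scaleR_left: "cinner (scaleR r x) (y::'a::chilbert) = of_real r * cinner x y"
  by (simp add: scaleR_scaleC cinner_scaleC_left)

lemma cinner_scaleR_right: "cinner y (scaleR r x) = of_real r * cinner (y::'a::chilbert) x"
  by (simp add: scaleR_scaleC cinner_scaleC_right)

lemmas cinner_simps = cinner_add_left cinner_add_right cinner_diff_left cinner_diff_right
  cinner_scaleC_left cinner_scaleC_right cinner_scaleR_left cinner_scaleR_right

lemma cinner_self_eq_norm: "cinner x (x::'a::chilbert) = of_real ((norm x)\<^sup>2)"
proof -
  have "Im (cinner x x) = 0"
    using arg_cong[OF cinner_cnj_commute[of x x], of Im] by simp
  moreover have "Re (cinner x x) = (norm x)\<^sup>2"
    using norm_eq_sqrt_cinner[of x] cinner_self_nonneg[of x] by simp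
  ultimately show ?thesis by (simp add: complex_eq_iff)
qed

lemma Re_cinner_self: "Re (cinner x (x::'a::chilbert)) = (norm x)\<^sup>2"
  by (simp add: cinner_self_eq_norm)

declare cinner_self_eq_0 [simp]

lemma norm_scaleC: "norm (scaleC a x) = cmod a * norm (x::'a::chilbert)"
proof -
  have "(norm (scaleC a x))\<^sup>2 = Re (cinner (scaleC a x) (scaleC a x))" by (simp add: Re_cinner_self)
  also have "\<dots> = Re (cnj a * a * cinner x x)"
    by (simp only: cinner_scaleC_left cinner_scaleC_right mult.assoc mult.left_commute)
  also have "cnj a * a = of_real ((cmod a)\<^sup>2)"
    using complex_norm_square[of a] by (simp add: mult.commute)
  hence "Re (cnj a * a * cinner x x) = (cmod a * norm x)\<^sup>2"
    by (simp add: cinner_self_eq_norm power_mult_distrib del: of_real_power)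
  finally show ?thesis by (simp add: power2_eq_iff_nonneg)
qed

lemma norm_cinner_le: "cmod (cinner x y) \<le> norm x * norm (y::'a::chilbert)"
proof (cases "y = 0")
  case False
  hence ny: "norm y > 0" by simp
  define c where "c = cinner y x / of_real ((norm y)\<^sup>2)"
  define w where "w = x - scaleC c y"
  have yw: "cinner y w = 0" and wy: "cinner w y = 0"
    using ny cinner_cnj_commute[of w y]
    by (simp_all add: w_def c_def cinner_diff_right cinner_scaleC_right cinner_self_eq_norm)
  have "x = w + scaleC c y" by (simp add: w_def)
  hence "cinner x x = cinner w w + cnj c * c * cinner y y"
    by (simp add: cinner_simps yw wy mult.assoc)
  hence "(norm x)\<^sup>2 = (norm w)\<^sup>2 + (cmod c)\<^sup>2 * (norm y)\<^sup>2"
    using Re_cinner_self[of x]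
    by (simp add: cinner_self_eq_norm complex_norm_square[symmetric] mult.commute)
  moreover have "cmod c = cmod (cinner x y) / (norm y)\<^sup>2"
    using cinner_cnj_commute[of y x] by (simp add: c_def norm_divide norm_power)
  ultimately have "(cmod (cinner x y))\<^sup>2 \<le> (norm x * norm y)\<^sup>2"
    using ny zero_le_power2[of "norm w"]
    by (simp add: power_divide field_simps power2_eq_square)
  thus ?thesis by (simp add: power2_le_iff_abs_le)
qed simp

lemma abs_Re_cinner_le: "\<bar>Re (cinner x (y::'a::chilbert))\<bar> \<le> norm x * norm y"
  using abs_Re_le_cmod[of "cinner x y"] norm_cinner_le[of x y] by linarith

lemma bounded_linear_cinner_right: "bounded_linear (\<lambda>y. cinner (x::'a::chilbert) y)"
proof (rule bounded_linear_intro[where K="norm x"])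
  show "cmod (cinner x y) \<le> norm y * norm x" for y
    using norm_cinner_le[of x y] by (simp add: mult.commute)
qed (simp_all add: cinner_add_right cinner_scaleR_right scaleR_conv_of_real)

lemma bounded_linear_cinner_left: "bounded_linear (\<lambda>x. cinner x (y::'a::chilbert))"
  by (rule bounded_linear_intro[where K="norm y"])
     (simp_all add: cinner_add_left cinner_scaleR_left scaleR_conv_of_real norm_cinner_le)

lemma bounded_linear_scaleC: "bounded_linear (\<lambda>x. scaleC c (x::'a::chilbert))"
  by (rule bounded_linear_intro[where K="cmod c"])
     (auto simp: scaleC_add_right norm_scaleC scaleR_scaleC scaleC_scaleC mult.commute)

lemma norm_add_square_orthogonal:
  "cinner x y = 0 \<Longrightarrow> (norm (x + y))\<^sup>2 = (norm x)\<^sup>2 + (norm (y::'a::chilbert))\<^sup>2"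
proof -
  assume xy: "cinner x y = 0"
  hence "cinner (x + y) (x + y) = cinner x x + cinner y y"
    using cinner_cnj_commute[of y x] by (simp add: cinner_add_left cinner_add_right)
  thus ?thesis by (metis Re_cinner_self plus_complex.sel(1))
qed

lemma parallelogram_law:
  "(norm (a + b))\<^sup>2 + (norm (a - b))\<^sup>2 = 2 * (norm a)\<^sup>2 + 2 * (norm (b::'a::chilbert))\<^sup>2"
proof -
  have "cinner (a + b) (a + b) + cinner (a - b) (a - b) = 2 * cinner a a + 2 * cinner b b"
    by (simp add: cinner_simps)
  hence "Re (cinner (a + b) (a + b)) + Re (cinner (a - b) (a - b)) = 2 * Re (cinner a a) + 2 * Re (cinner b b)"
    by (metis plus_complex.sel(1) Re_complex_of_real mult_2 of_real_numeral)
  thus ?thesis by (simp add: Re_cinner_self)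
qed

lemma orthogonal_to_dense_eq_0:
  assumes "closure S = UNIV" "\<And>s. s \<in> S \<Longrightarrow> cinner s (x::'a::chilbert) = 0"
  shows "x = 0"
proof -
  have "closed {s. cinner s x = 0}"
    using continuous_closed_preimage_constant[OF
        linear_continuous_on[OF bounded_linear_cinner_left, of UNIV x]] by simp
  hence "closure S \<subseteq> {s. cinner s x = 0}" using assms(2) by (intro closure_minimal) auto
  hence "cinner x x = 0" using assms(1) by blast
  thus ?thesis by simp
qed

section \<open>Subspaces and bounded operators\<close>

lemma csubspace_0: "csubspace M \<Longrightarrow> 0 \<in> M"
  unfolding csubspace_def by blast

lemma csubspace_add: "csubspace M \<Longrightarrow> x \<in> M \<Longrightarrow> y \<in> M \<Longrightarrow> x + y \<in> M"
  unfolding csubspace_def by blast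

lemma csubspace_scaleC: "csubspace M \<Longrightarrow> x \<in> M \<Longrightarrow> scaleC c x \<in> M"
  unfolding csubspace_def by blast

lemma csubspace_scaleR: "csubspace M \<Longrightarrow> x \<in> M \<Longrightarrow> scaleR r x \<in> M"
  unfolding csubspace_def by (simp add: scaleR_scaleC)

lemma csubspace_minus: "csubspace M \<Longrightarrow> x \<in> M \<Longrightarrow> - x \<in> M"
  using csubspace_scaleC[of M x "-1"] by (simp add: scaleC_minus1)

lemma csubspace_diff: "csubspace M \<Longrightarrow> x \<in> M \<Longrightarrow> y \<in> M \<Longrightarrow> x - y \<in> M"
  using csubspace_add[of M x "- y"] csubspace_minus[of M y] by simp

lemma csubspace_sum: "csubspace M \<Longrightarrow> (\<And>i. i \<in> I \<Longrightarrow> f i \<in> M) \<Longrightarrow> sum f I \<in> M"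
  unfolding csubspace_def by (induction I rule: infinite_finite_induct) auto

definition bounded_clinear :: "('a::chilbert \<Rightarrow> 'a) \<Rightarrow> bool" where
  "bounded_clinear A \<longleftrightarrow> bounded_linear A \<and> (\<forall>c x. A (scaleC c x) = scaleC c (A x))"

definition hermitian :: "('a::chilbert \<Rightarrow> 'a) \<Rightarrow> bool" where
  "hermitian A \<longleftrightarrow> (\<forall>x y. cinner (A x) y = cinner x (A y))"

lemma hermitianD: "hermitian A \<Longrightarrow> cinner (A x) y = cinner x (A y)"
  unfolding hermitian_def by blast

lemma bounded_clinearI:
  assumes "\<And>x y. A (x + y) = A x + A y" "\<And>c x. A (scaleC c x) = scaleC c (A x)"
    "\<And>x. norm (A x) \<le> norm x * K"
  shows "bounded_clinear (A::'a::chilbert \<Rightarrow> 'a)"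
  unfolding bounded_clinear_def using assms
  by (auto intro!: bounded_linear_intro[where K=K] simp: scaleR_scaleC)

context
  fixes A :: "'a::chilbert \<Rightarrow> 'a"
  assumes A: "bounded_clinear A"
begin

lemma bounded_clinear_bounded_linear: "bounded_linear A"
  using A unfolding bounded_clinear_def by simp

interpretation bounded_linear A by (rule bounded_clinear_bounded_linear)

lemma bounded_clinear_add: "A (x + y) = A x + A y" by (rule add)
lemma bounded_clinear_diff: "A (x - y) = A x - A y" by (rule diff)
lemma bounded_clinear_zero: "A 0 = 0" by (rule zero)
lemma bounded_clinear_scaleR: "A (scaleR r x) = scaleR r (A x)" by (rule scaleR)

lemma bounded_clinear_scaleC: "A (scaleC c x) = scaleC c (A x)"
  using A unfolding bounded_clinear_def by simp

lemma bounded_clinear_pos_bound: "\<exists>K>0. \<forall>x. norm (A x) \<le> norm x * K"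
  by (rule pos_bounded)

end

lemma bounded_clinear_ident: "bounded_clinear (\<lambda>x. x)"
  unfolding bounded_clinear_def by (simp add: bounded_linear_ident)

lemma bounded_clinear_compose:
  "bounded_clinear A \<Longrightarrow> bounded_clinear B \<Longrightarrow> bounded_clinear (\<lambda>x. A (B x))"
  unfolding bounded_clinear_def by (auto intro: bounded_linear_compose)

lemma bounded_clinear_add_op:
  "bounded_clinear A \<Longrightarrow> bounded_clinear B \<Longrightarrow> bounded_clinear (\<lambda>x. A x + B x)"
  unfolding bounded_clinear_def by (auto intro: bounded_linear_add simp: scaleC_add_right)

lemma bounded_clinear_diff_op:
  "bounded_clinear A \<Longrightarrow> bounded_clinear B \<Longrightarrow> bounded_clinear (\<lambda>x. A x - B x)"
  unfolding bounded_clinear_def by (auto intro: bounded_linear_sub simp: scaleC_diff_right)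

lemma bounded_clinear_scaleC_op: "bounded_clinear A \<Longrightarrow> bounded_clinear (\<lambda>x. scaleC c (A x))"
  unfolding bounded_clinear_def
  by (auto intro: bounded_linear_compose[OF bounded_linear_scaleC] simp: scaleC_scaleC mult.commute)

lemma bounded_clinear_scaleR_op: "bounded_clinear A \<Longrightarrow> bounded_clinear (\<lambda>x. scaleR r (A x))"
  using bounded_clinear_scaleC_op[of A "of_real r"] by (simp add: scaleR_scaleC)

lemma bounded_clinear_funpow: "bounded_clinear A \<Longrightarrow> bounded_clinear (A ^^ n)"
  by (induction n) (auto simp: bounded_clinear_ident[unfolded id_def[symmetric]]
      bounded_clinear_compose[unfolded comp_def[symmetric]])

lemma hermitian_sub_scaleR: "hermitian A \<Longrightarrow> hermitian (\<lambda>x. A x - r *\<^sub>R x)"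
  unfolding hermitian_def by (simp add: cinner_simps)

lemma closed_csubspace_kernel:
  assumes N: "bounded_clinear N" and K: "closed_csubspace K"
  shows "closed_csubspace {x\<in>K. N x = 0}"
proof -
  have "closed {x. N x = 0}"
    using continuous_closed_preimage_constant[OF
        linear_continuous_on[OF bounded_clinear_bounded_linear[OF N]], of UNIV 0] by simp
  hence "closed {x\<in>K. N x = 0}"
    using K closed_Int unfolding closed_csubspace_def by (auto simp: Collect_conj_eq)
  moreover have "csubspace {x\<in>K. N x = 0}"
    using K unfolding closed_csubspace_def csubspace_def
    by (auto simp: bounded_clinear_zero[OF N] bounded_clinear_add[OF N] bounded_clinear_scaleC[OF N])
  ultimately show ?thesis unfolding closed_csubspace_def by simp
qed

section \<open>The binomial series of \<open>\<surd>(1 - t)\<close>\<close>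

definition sqrt_coeff :: "nat \<Rightarrow> real" where
  "sqrt_coeff k = (-1)^k * ((1/2) gchoose k)"

lemma gbinomial_Suc_ratio: "(a::real) gchoose Suc k = (a gchoose k) * (a - real k) / (1 + real k)"
proof -
  have "fact (Suc k) * (a gchoose Suc k) = (\<Prod>i = 0..<Suc k. a - of_nat i)"
    by (rule gbinomial_mult_fact)
  also have "\<dots> = fact k * (a gchoose k) * (a - real k)"
    by (simp add: gbinomial_mult_fact)
  finally have "fact k * ((1 + real k) * (a gchoose Suc k)) = fact k * ((a gchoose k) * (a - real k))"
    by (simp add: algebra_simps)
  hence "(1 + real k) * (a gchoose Suc k) = (a gchoose k) * (a - real k)" by simp
  thus ?thesis by (simp add: field_simps)
qed

lemma sqrt_coeff_0 [simp]: "sqrt_coeff 0 = 1"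
  by (simp add: sqrt_coeff_def)

lemma sqrt_coeff_Suc: "sqrt_coeff (Suc k) = sqrt_coeff k * ((real k - 1/2) / (real k + 1))"
  unfolding sqrt_coeff_def gbinomial_Suc_ratio by (simp add: field_simps)

lemma sqrt_coeff_nonpos: "k \<ge> 1 \<Longrightarrow> sqrt_coeff k \<le> 0"
proof (induction k)
  case (Suc k)
  show ?case
  proof (cases "k = 0")
    case False
    with Suc have "sqrt_coeff k \<le> 0" by simp
    moreover have "(real k - 1/2) / (real k + 1) \<ge> 0" using False by simp
    ultimately show ?thesis unfolding sqrt_coeff_Suc by (rule mult_nonpos_nonneg)
  qed (simp add: sqrt_coeff_Suc)
qed simp

lemma abs_sqrt_coeff: "\<bar>sqrt_coeff k\<bar> = (if k = 0 then 1 else - sqrt_coeff k)"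
  using sqrt_coeff_nonpos[of k] by (auto simp: sqrt_coeff_def)

lemma sqrt_coeff_sums:
  assumes "0 \<le> t" "t < 1"
  shows "(\<lambda>n. sqrt_coeff n * t^n) sums sqrt (1 - t)"
proof -
  have "((1/2) gchoose n) * (-t)^n = sqrt_coeff n * t^n" for n
    unfolding sqrt_coeff_def power_minus[of t n] by (simp only: mult_ac)
  thus ?thesis using sqrt_series[of "- t"] assms by simp
qed

lemma sum_abs_sqrt_coeff_power_le:
  assumes t: "0 \<le> t" "t < 1"
  shows "(\<Sum>n<N. \<bar>sqrt_coeff n\<bar> * t^n) \<le> 2"
proof (cases N)
  case (Suc M)
  let ?s = "\<lambda>N. (\<Sum>n<N. sqrt_coeff n * t^n)"
  have "?s K \<le> ?s (Suc M)" if "K \<ge> Suc M" for K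
  proof -
    have "?s K = ?s (Suc M) + (\<Sum>n\<in>{Suc M..<K}. sqrt_coeff n * t^n)"
      using sum.atLeastLessThan_concat[of 0 "Suc M" K "\<lambda>n. sqrt_coeff n * t^n"] that
      by (simp add: atLeast0LessThan)
    moreover have "(\<Sum>n\<in>{Suc M..<K}. sqrt_coeff n * t^n) \<le> 0"
      by (rule sum_nonpos) (auto intro!: mult_nonpos_nonneg sqrt_coeff_nonpos simp: t)
    ultimately show ?thesis by simp
  qed
  moreover have "?s \<longlonglongrightarrow> sqrt (1 - t)" using sqrt_coeff_sums[OF t] by (simp add: sums_def)
  ultimately have "sqrt (1 - t) \<le> ?s (Suc M)"
    by (intro LIMSEQ_le_const2) auto
  hence "?s (Suc M) \<ge> 0" using real_sqrt_ge_zero[of "1 - t"] t by linarith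
  \<comment> \<open>all coefficients but the first are nonpositive, so \<open>\<bar>c\<^sub>n\<bar> + c\<^sub>n\<close> vanishes for \<open>n > 0\<close>\<close>
  moreover have "(\<Sum>n<Suc M. (\<bar>sqrt_coeff n\<bar> + sqrt_coeff n) * t^n)
      = (\<bar>sqrt_coeff 0\<bar> + sqrt_coeff 0) * t^0
        + (\<Sum>n<M. (\<bar>sqrt_coeff (Suc n)\<bar> + sqrt_coeff (Suc n)) * t^(Suc n))"
    by (rule sum.lessThan_Suc_shift)
  hence "(\<Sum>n<Suc M. (\<bar>sqrt_coeff n\<bar> + sqrt_coeff n) * t^n) = 2"
    by (simp add: abs_sqrt_coeff del: sum.lessThan_Suc)
  hence "(\<Sum>n<Suc M. \<bar>sqrt_coeff n\<bar> * t^n) + ?s (Suc M) = 2"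
    by (simp add: sum.distrib distrib_right del: sum.lessThan_Suc)
  ultimately show ?thesis using Suc by simp
qed simp

lemma sum_abs_sqrt_coeff_le: "(\<Sum>n<N. \<bar>sqrt_coeff n\<bar>) \<le> 2"
proof -
  define t where "t m = 1 - inverse (real (Suc m))" for m
  have t: "0 \<le> t m" "t m < 1" for m unfolding t_def by (simp_all add: field_simps)
  have "t \<longlonglongrightarrow> 1 - 0" unfolding t_def
    by (intro tendsto_diff tendsto_const LIMSEQ_inverse_real_of_nat)
  hence "(\<lambda>m. \<Sum>n<N. \<bar>sqrt_coeff n\<bar> * (t m)^n) \<longlonglongrightarrow> (\<Sum>n<N. \<bar>sqrt_coeff n\<bar> * 1^n)"
    by (intro tendsto_sum tendsto_mult tendsto_const tendsto_power) simp
  hence "(\<Sum>n<N. \<bar>sqrt_coeff n\<bar> * 1^n) \<le> 2"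
    by (rule LIMSEQ_le_const2) (use sum_abs_sqrt_coeff_power_le t in auto)
  thus ?thesis by simp
qed

lemma summable_abs_sqrt_coeff: "summable (\<lambda>n. \<bar>sqrt_coeff n\<bar>)"
proof (rule bounded_imp_summable[where B=2])
  show "(\<Sum>k\<le>n. \<bar>sqrt_coeff k\<bar>) \<le> 2" for n
    using sum_abs_sqrt_coeff_le[of "Suc n"] by (simp only: lessThan_Suc_atMost)
qed simp

lemma suminf_abs_sqrt_coeff_le: "(\<Sum>n. \<bar>sqrt_coeff n\<bar>) \<le> 2"
  by (rule suminf_le_const[OF summable_abs_sqrt_coeff sum_abs_sqrt_coeff_le])

text \<open>The Cauchy square of the series is \<open>1 - t\<close>, by Vandermonde's identity.\<close>
lemma sqrt_coeff_convolution:
  "(\<Sum>i\<le>n. sqrt_coeff i * sqrt_coeff (n - i)) = (if n = 0 then 1 else if n = 1 then -1 else 0)"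
proof -
  have "(\<Sum>i\<le>n. sqrt_coeff i * sqrt_coeff (n - i))
      = (-1)^n * (\<Sum>i\<in>{0..n}. ((1/2) gchoose i) * ((1/2) gchoose (n - i)))"
    unfolding sum_distrib_left atMost_atLeast0
    by (rule sum.cong) (auto simp: sqrt_coeff_def power_add[symmetric])
  also have "\<dots> = (-1)^n * ((1/2 + 1/2) gchoose n)" by (simp only: gbinomial_Vandermonde)
  also have "\<dots> = (-1)^n * of_nat (1 choose n)"
    using binomial_gbinomial[of 1 n, where 'a=real] by simp
  also have "\<dots> = (if n = 0 then 1 else if n = 1 then -1 else 0)"
    by (cases n) (auto simp: binomial_eq_0)
  finally show ?thesis .
qed

section \<open>The square root of \<open>I - C\<close> for a contraction \<open>C\<close>\<close>

definition sqrt_id_minus_partial :: "('a::chilbert \<Rightarrow> 'a) \<Rightarrow> nat \<Rightarrow> 'a \<Rightarrow> 'a" where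
  "sqrt_id_minus_partial C N x = (\<Sum>k<N. sqrt_coeff k *\<^sub>R (C ^^ k) x)"

definition sqrt_id_minus :: "('a::chilbert \<Rightarrow> 'a) \<Rightarrow> 'a \<Rightarrow> 'a" where
  "sqrt_id_minus C x = (\<Sum>k. sqrt_coeff k *\<^sub>R (C ^^ k) x)"

definition cauchy_square_defect :: "nat \<Rightarrow> real" where
  "cauchy_square_defect N = (\<Sum>(i,j)\<in>{..<N}\<times>{..<N}. \<bar>sqrt_coeff i\<bar> * \<bar>sqrt_coeff j\<bar>)
     - (\<Sum>(i,j)\<in>{(i,j). i + j < N}. \<bar>sqrt_coeff i\<bar> * \<bar>sqrt_coeff j\<bar>)"

lemma cauchy_square_defect_tendsto_0: "cauchy_square_defect \<longlonglongrightarrow> 0"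
proof -
  let ?B = "\<Sum>k. \<bar>sqrt_coeff k\<bar>"
  have "(\<lambda>N. (\<Sum>i<N. \<bar>sqrt_coeff i\<bar>) * (\<Sum>j<N. \<bar>sqrt_coeff j\<bar>)) \<longlonglongrightarrow> ?B * ?B"
    by (intro tendsto_mult summable_LIMSEQ summable_abs_sqrt_coeff)
  moreover have "(\<lambda>n. \<Sum>i\<le>n. \<bar>sqrt_coeff i\<bar> * \<bar>sqrt_coeff (n - i)\<bar>) sums (?B * ?B)"
    using Cauchy_product_sums[of "\<lambda>k. \<bar>sqrt_coeff k\<bar>" "\<lambda>k. \<bar>sqrt_coeff k\<bar>"] summable_abs_sqrt_coeff
    by simp
  ultimately have "cauchy_square_defect \<longlonglongrightarrow> ?B * ?B - ?B * ?B"
    unfolding cauchy_square_defect_def sum.triangle_reindex sums_def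
    by (intro tendsto_diff) (simp_all add: sum_product sum.cartesian_product)
  thus ?thesis by simp
qed

lemma sqrt_coeff_triangle_sum:
  fixes C :: "'a::real_vector \<Rightarrow> 'a"
  assumes "N \<ge> 2"
  shows "(\<Sum>(i,j)\<in>{(i,j). i + j < N}. (sqrt_coeff i * sqrt_coeff j) *\<^sub>R (C ^^ (i + j)) x) = x - C x"
proof -
  have "(\<Sum>(i,j)\<in>{(i,j). i + j < N}. (sqrt_coeff i * sqrt_coeff j) *\<^sub>R (C ^^ (i + j)) x)
      = (\<Sum>n<N. (\<Sum>i\<le>n. sqrt_coeff i * sqrt_coeff (n - i)) *\<^sub>R (C ^^ n) x)"
    unfolding sum.triangle_reindex by (intro sum.cong refl) (simp add: scaleR_sum_left)
  also have "\<dots> = x - C x"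
    using assms by (induction N rule: nat_induct_at_least) (simp_all add: numeral_2_eq_2 sqrt_coeff_convolution)
  finally show ?thesis .
qed

lemma norm_funpow_contraction:
  fixes C :: "'a::real_normed_vector \<Rightarrow> 'a"
  assumes "\<And>x. norm (C x) \<le> norm x" shows "norm ((C ^^ k) x) \<le> norm x"
proof (induction k)
  case (Suc k)
  thus ?case using assms[of "(C ^^ k) x"] by simp
qed simp

context
  fixes C :: "'a::chilbert \<Rightarrow> 'a"
  assumes contraction: "\<And>x. norm (C x) \<le> norm x"
begin

lemma norm_sqrt_term_le: "norm (sqrt_coeff k *\<^sub>R (C ^^ k) x) \<le> \<bar>sqrt_coeff k\<bar> * norm x"
  using norm_funpow_contraction[OF contraction, of k x] by (simp add: mult_left_mono)

lemma summable_norm_sqrt_terms: "summable (\<lambda>k. norm (sqrt_coeff k *\<^sub>R (C ^^ k) x))"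
proof (rule summable_comparison_test'[where N=0])
  show "norm (norm (sqrt_coeff k *\<^sub>R (C ^^ k) x)) \<le> \<bar>sqrt_coeff k\<bar> * norm x" for k
    using norm_sqrt_term_le by simp
qed (rule summable_mult2[OF summable_abs_sqrt_coeff])

lemma summable_sqrt_terms: "summable (\<lambda>k. sqrt_coeff k *\<^sub>R (C ^^ k) x)"
  by (rule summable_norm_cancel[OF summable_norm_sqrt_terms])

lemma sqrt_id_minus_partial_tendsto: "(\<lambda>N. sqrt_id_minus_partial C N x) \<longlonglongrightarrow> sqrt_id_minus C x"
  unfolding sqrt_id_minus_partial_def sqrt_id_minus_def by (rule summable_LIMSEQ[OF summable_sqrt_terms])

lemma norm_sqrt_id_minus_le: "norm (sqrt_id_minus C x) \<le> norm x * 2"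
proof -
  have "norm (sqrt_id_minus C x) \<le> (\<Sum>k. norm (sqrt_coeff k *\<^sub>R (C ^^ k) x))"
    unfolding sqrt_id_minus_def by (rule summable_norm[OF summable_norm_sqrt_terms])
  also have "\<dots> \<le> (\<Sum>k. \<bar>sqrt_coeff k\<bar> * norm x)"
    by (intro suminf_le summable_norm_sqrt_terms summable_mult2[OF summable_abs_sqrt_coeff]
        norm_sqrt_term_le)
  also have "\<dots> = (\<Sum>k. \<bar>sqrt_coeff k\<bar>) * norm x"
    by (rule suminf_mult2[OF summable_abs_sqrt_coeff, symmetric])
  also have "\<dots> \<le> 2 * norm x" by (rule mult_right_mono[OF suminf_abs_sqrt_coeff_le]) simp
  finally show ?thesis by (simp add: mult.commute)
qed

lemma norm_sqrt_id_minus_partial_le: "norm (sqrt_id_minus_partial C N y) \<le> 2 * norm y"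
proof -
  have "norm (sqrt_id_minus_partial C N y) \<le> (\<Sum>k<N. \<bar>sqrt_coeff k\<bar> * norm y)"
    unfolding sqrt_id_minus_partial_def by (rule order_trans[OF norm_sum sum_mono]) (rule norm_sqrt_term_le)
  also have "\<dots> \<le> 2 * norm y"
    by (simp add: sum_distrib_right[symmetric] mult_right_mono[OF sum_abs_sqrt_coeff_le])
  finally show ?thesis .
qed

lemma sqrt_id_minus_commute:
  assumes B: "bounded_clinear B" and BC: "\<And>x. B (C x) = C (B x)"
  shows "B (sqrt_id_minus C x) = sqrt_id_minus C (B x)"
proof -
  have "B ((C ^^ k) x) = (C ^^ k) (B x)" for k by (induction k) (simp_all add: BC)
  moreover have "B (sqrt_id_minus C x) = (\<Sum>k. B (sqrt_coeff k *\<^sub>R (C ^^ k) x))"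
    unfolding sqrt_id_minus_def
    by (rule bounded_linear.suminf[OF bounded_clinear_bounded_linear[OF B] summable_sqrt_terms])
  ultimately show ?thesis
    unfolding sqrt_id_minus_def by (simp add: bounded_clinear_scaleR[OF B])
qed

lemma bounded_clinear_sqrt_id_minus:
  assumes C: "bounded_clinear C"
  shows "bounded_clinear (sqrt_id_minus C)"
proof (rule bounded_clinearI[where K=2])
  show "sqrt_id_minus C (x + y) = sqrt_id_minus C x + sqrt_id_minus C y" for x y
    unfolding sqrt_id_minus_def
    by (simp add: suminf_add[OF summable_sqrt_terms summable_sqrt_terms]
        bounded_clinear_add[OF bounded_clinear_funpow[OF C]] scaleR_add_right)
  show "sqrt_id_minus C (scaleC c x) = scaleC c (sqrt_id_minus C x)" for c x
    by (rule sqrt_id_minus_commute[OF bounded_clinear_scaleC_op[OF bounded_clinear_ident],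
          symmetric]) (rule bounded_clinear_scaleC[OF C, symmetric])
qed (rule norm_sqrt_id_minus_le)

lemma sqrt_id_minus_closed_csubspace:
  assumes K: "closed_csubspace K" and CK: "C ` K \<subseteq> K" and x: "x \<in> K"
  shows "sqrt_id_minus C x \<in> K"
proof (rule Lim_in_closed_set[OF _ _ _ sqrt_id_minus_partial_tendsto])
  have "(C ^^ k) x \<in> K" for k using CK x by (induction k) auto
  moreover have "csubspace K" using K by (simp add: closed_csubspace_def)
  ultimately show "\<forall>\<^sub>F N in sequentially. sqrt_id_minus_partial C N x \<in> K"
    by (auto intro!: always_eventually csubspace_sum csubspace_scaleR
        simp: sqrt_id_minus_partial_def)
qed (use K in \<open>auto simp: closed_csubspace_def\<close>)

text \<open>Termwise: \<open>c\<^sub>0 = 1\<close> and \<open>\<Sum>\<^sub>k\<^sub>>\<^sub>0 \<bar>c\<^sub>k\<bar> \<le> 1\<close>, while \<open>\<bar>Re \<langle>C\<^sup>k x, x\<rangle>\<bar> \<le> \<parallel>x\<parallel>\<^sup>2\<close>.\<close>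
lemma sqrt_id_minus_nonneg: "0 \<le> Re (cinner (sqrt_id_minus C x) x)"
proof -
  let ?t = "\<lambda>k. sqrt_coeff k * Re (cinner ((C ^^ k) x) x)"
  have bl: "bounded_linear (\<lambda>y. Re (cinner y x))"
    by (rule bounded_linear_compose[OF bounded_linear_Re bounded_linear_cinner_left])
  have e: "Re (cinner (sqrt_id_minus C x) x) = (\<Sum>k. ?t k)"
    unfolding sqrt_id_minus_def bounded_linear.suminf[OF bl summable_sqrt_terms]
    by (simp add: cinner_scaleR_left)
  have "summable ?t"
    using bounded_linear.summable[OF bl summable_sqrt_terms, of x] by (simp add: cinner_scaleR_left)
  define g where "g k = (if k = 0 then 2 else 0) * (norm x)\<^sup>2 - \<bar>sqrt_coeff k\<bar> * (norm x)\<^sup>2" for k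
  have gs: "g sums (2 * (norm x)\<^sup>2 - (\<Sum>k. \<bar>sqrt_coeff k\<bar>) * (norm x)\<^sup>2)"
    unfolding g_def
    by (intro sums_diff sums_mult2 summable_sums[OF summable_abs_sqrt_coeff])
       (use sums_single[of 0 "\<lambda>_. 2::real"] in simp)
  have "g k \<le> ?t k" for k
  proof (cases "k = 0")
    case False
    have "norm ((C ^^ k) x) * norm x \<le> norm x * norm x"
      by (rule mult_right_mono[OF norm_funpow_contraction[OF contraction] norm_ge_zero])
    hence "\<bar>Re (cinner ((C ^^ k) x) x)\<bar> \<le> (norm x)\<^sup>2"
      using abs_Re_cinner_le[of "(C ^^ k) x" x] by (simp add: power2_eq_square)
    hence "\<bar>?t k\<bar> \<le> \<bar>sqrt_coeff k\<bar> * (norm x)\<^sup>2"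
      by (simp add: abs_mult mult_left_mono)
    thus ?thesis using False by (simp add: g_def)
  qed (simp add: g_def Re_cinner_self)
  hence "2 * (norm x)\<^sup>2 - (\<Sum>k. \<bar>sqrt_coeff k\<bar>) * (norm x)\<^sup>2 \<le> (\<Sum>k. ?t k)"
    using sums_unique[OF gs] suminf_le[OF _ sums_summable[OF gs] \<open>summable ?t\<close>] by simp
  moreover have "(\<Sum>k. \<bar>sqrt_coeff k\<bar>) * (norm x)\<^sup>2 \<le> 2 * (norm x)\<^sup>2"
    by (rule mult_right_mono[OF suminf_abs_sqrt_coeff_le]) simp
  ultimately show ?thesis using e by linarith
qed

lemma sqrt_id_minus_partial_square:
  assumes C: "bounded_clinear C" and N: "N \<ge> 2"
  shows "norm (sqrt_id_minus_partial C N (sqrt_id_minus_partial C N x) - (x - C x))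
    \<le> cauchy_square_defect N * norm x"
proof -
  let ?f = "\<lambda>(i,j). (sqrt_coeff i * sqrt_coeff j) *\<^sub>R (C ^^ (i + j)) x"
  let ?g = "\<lambda>(i,j). \<bar>sqrt_coeff i\<bar> * \<bar>sqrt_coeff j\<bar>"
  let ?S = "{..<N}\<times>{..<N}" and ?T = "{(i,j). i + j < N}"
  have sub: "?T \<subseteq> ?S" by auto
  interpret L: bounded_linear "sqrt_id_minus_partial C N"
    unfolding sqrt_id_minus_partial_def[abs_def]
    by (intro bounded_linear_sum bounded_linear_compose[OF bounded_linear_scaleR_right]
        bounded_clinear_bounded_linear[OF bounded_clinear_funpow[OF C]])
  have "sqrt_id_minus_partial C N (sqrt_id_minus_partial C N x)
      = (\<Sum>j<N. \<Sum>i<N. (sqrt_coeff i * sqrt_coeff j) *\<^sub>R (C ^^ (i + j)) x)"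
    unfolding sqrt_id_minus_partial_def[of C N x] L.sum L.scaleR
    by (simp add: sqrt_id_minus_partial_def scaleR_sum_right funpow_add mult.commute)
  also have "\<dots> = sum ?f ?S"
    by (subst sum.swap) (rule sum.cartesian_product)
  finally have "sqrt_id_minus_partial C N (sqrt_id_minus_partial C N x) = sum ?f ?S" .
  hence "sqrt_id_minus_partial C N (sqrt_id_minus_partial C N x) - (x - C x) = sum ?f (?S - ?T)"
    using sum_diff[OF _ sub, of ?f] sqrt_coeff_triangle_sum[OF N, of C x] by simp
  also have "norm \<dots> \<le> (\<Sum>p\<in>?S - ?T. ?g p * norm x)"
    by (rule order_trans[OF norm_sum sum_mono]) (auto simp: abs_mult mult_left_mono norm_funpow_contraction[OF contraction])
  also have "\<dots> = cauchy_square_defect N * norm x"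
    by (simp add: cauchy_square_defect_def sum_diff[OF _ sub, symmetric] sum_distrib_right)
  finally show ?thesis .
qed

lemma sqrt_id_minus_square:
  assumes C: "bounded_clinear C"
  shows "sqrt_id_minus C (sqrt_id_minus C x) = x - C x"
proof -
  let ?P = "sqrt_id_minus_partial C" and ?S = "sqrt_id_minus C"
  have "(\<lambda>N. ?P N (?P N x)) \<longlonglongrightarrow> ?S (?S x)"
  proof (rule Lim_transform[OF sqrt_id_minus_partial_tendsto])
    have "(\<lambda>N. ?P N x - ?S x) \<longlonglongrightarrow> 0" by (rule LIM_zero[OF sqrt_id_minus_partial_tendsto])
    hence "(\<lambda>N. 2 * norm (?P N x - ?S x)) \<longlonglongrightarrow> 0"
      by (rule tendsto_mult_right_zero[OF tendsto_norm_zero])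
    hence "(\<lambda>N. ?P N (?P N x - ?S x)) \<longlonglongrightarrow> 0"
      by (rule Lim_null_comparison[rotated])
         (intro always_eventually allI norm_sqrt_id_minus_partial_le)
    moreover have "?P N (?P N x - ?S x) = ?P N (?P N x) - ?P N (?S x)" for N
      unfolding sqrt_id_minus_partial_def by (simp add: sum_subtractf scaleR_diff_right
          bounded_clinear_diff[OF bounded_clinear_funpow[OF C]])
    ultimately show "(\<lambda>N. ?P N (?P N x) - ?P N (?S x)) \<longlonglongrightarrow> 0" by simp
  qed
  moreover have "(\<lambda>N. ?P N (?P N x)) \<longlonglongrightarrow> x - C x"
  proof (rule LIM_zero_cancel, rule Lim_null_comparison)
    show "\<forall>\<^sub>F N in sequentially. norm (?P N (?P N x) - (x - C x)) \<le> cauchy_square_defect N * norm x"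
      by (rule eventually_sequentiallyI[of 2]) (rule sqrt_id_minus_partial_square[OF C])
    show "(\<lambda>N. cauchy_square_defect N * norm x) \<longlonglongrightarrow> 0"
      by (rule tendsto_mult_left_zero[OF cauchy_square_defect_tendsto_0])
  qed
  ultimately show ?thesis by (rule LIMSEQ_unique)
qed

end

section \<open>Schur's lemma\<close>

lemma norm_id_minus_scaled_square_le:
  fixes D :: "'a::chilbert \<Rightarrow> 'a"
  assumes hD: "hermitian D" and M: "\<And>x. norm (D x) \<le> norm x * M" and a: "a \<ge> 0" "a * M\<^sup>2 = 1"
  shows "norm (x - a *\<^sub>R D (D x)) \<le> norm x"
proof -
  let ?y = "D (D x)"
  have "cinner x ?y = of_real ((norm (D x))\<^sup>2)" "cinner ?y x = of_real ((norm (D x))\<^sup>2)"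
    using hermitianD[OF hD, of x "D x"] hermitianD[OF hD, of "D x" x]
    by (simp_all add: cinner_self_eq_norm del: of_real_power)
  moreover have expand: "cinner (x - a *\<^sub>R ?y) (x - a *\<^sub>R ?y)
      = cinner x x - of_real a * cinner x ?y - of_real a * cinner ?y x + of_real (a * a) * cinner ?y ?y"
    by (simp add: cinner_simps algebra_simps)
  ultimately have "Re (cinner (x - a *\<^sub>R ?y) (x - a *\<^sub>R ?y))
      = Re (cinner x x) - 2 * a * (norm (D x))\<^sup>2 + a * a * Re (cinner ?y ?y)"
    by simp
  hence norm_eq: "(norm (x - a *\<^sub>R ?y))\<^sup>2 = (norm x)\<^sup>2 - 2 * a * (norm (D x))\<^sup>2 + a * a * (norm ?y)\<^sup>2"
    by (simp add: Re_cinner_self)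
  have "(norm ?y)\<^sup>2 \<le> (norm (D x))\<^sup>2 * M\<^sup>2"
    using M[of "D x"] by (metis norm_ge_zero power_mono power_mult_distrib)
  hence "a * a * (norm ?y)\<^sup>2 \<le> a * a * ((norm (D x))\<^sup>2 * M\<^sup>2)"
    using a by (intro mult_left_mono) auto
  also have "\<dots> = a * (norm (D x))\<^sup>2" using a(2) by (simp add: algebra_simps)
  finally have "a * a * (norm ?y)\<^sup>2 \<le> a * (norm (D x))\<^sup>2" .
  moreover have "0 \<le> a * (norm (D x))\<^sup>2" using a by simp
  ultimately have "(norm (x - a *\<^sub>R ?y))\<^sup>2 \<le> (norm x)\<^sup>2" using norm_eq by linarith
  thus ?thesis by (simp add: power2_le_iff_abs_le)
qed

text \<open>The operator \<open>\<bar>D\<bar>\<close>, obtained as \<open>M \<surd>(I - D\<^sup>2/M\<^sup>2)\<close> for a bound \<open>M\<close> of \<open>D\<close>.\<close>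
lemma hermitian_abs_exists:
  fixes D :: "'a::chilbert \<Rightarrow> 'a"
  assumes D: "bounded_clinear D" and hD: "hermitian D"
  obtains S where "bounded_clinear S" "\<And>x. S (S x) = D (D x)" "\<And>x. 0 \<le> Re (cinner (S x) x)"
    "\<And>B x. bounded_clinear B \<Longrightarrow> (\<And>y. B (D y) = D (B y)) \<Longrightarrow> B (S x) = S (B x)"
    "\<And>K. closed_csubspace K \<Longrightarrow> D ` K \<subseteq> K \<Longrightarrow> S ` K \<subseteq> K"
proof -
  obtain M where M: "M > 0" "\<And>x. norm (D x) \<le> norm x * M"
    using bounded_clinear_pos_bound[OF D] by blast
  define a where "a = 1 / M\<^sup>2"
  have a: "a > 0" "a * M\<^sup>2 = 1" using M(1) by (auto simp: a_def)
  define C where "C x = x - a *\<^sub>R D (D x)" for x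
  have C: "bounded_clinear C"
    unfolding C_def
    by (intro bounded_clinear_diff_op bounded_clinear_ident bounded_clinear_scaleR_op
        bounded_clinear_compose[OF D D])
  have contraction: "norm (C x) \<le> norm x" for x
    unfolding C_def using norm_id_minus_scaled_square_le[OF hD M(2)] a by simp
  define S where "S x = M *\<^sub>R sqrt_id_minus C x" for x
  show ?thesis
  proof
    show "bounded_clinear S"
      unfolding S_def by (intro bounded_clinear_scaleR_op bounded_clinear_sqrt_id_minus contraction C)
    show "S (S x) = D (D x)" for x
    proof -
      have "M * (M * a) = 1" using a(2) by (simp add: power2_eq_square mult_ac)
      thus ?thesis
        using bounded_clinear_scaleR[OF bounded_clinear_sqrt_id_minus[OF contraction C]]
        by (simp add: S_def sqrt_id_minus_square[OF contraction C] C_def)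
    qed
    show "0 \<le> Re (cinner (S x) x)" for x
      using sqrt_id_minus_nonneg[OF contraction, of x] M(1) by (simp add: S_def cinner_scaleR_left)
    show "B (S x) = S (B x)" if B: "bounded_clinear B" and BD: "\<And>y. B (D y) = D (B y)" for B x
    proof -
      have "B (C y) = C (B y)" for y
        by (simp add: C_def bounded_clinear_diff[OF B] bounded_clinear_scaleR[OF B] BD)
      thus ?thesis
        by (simp add: S_def bounded_clinear_scaleR[OF B] sqrt_id_minus_commute[OF contraction B])
    qed
    show "S ` K \<subseteq> K" if K: "closed_csubspace K" and DK: "D ` K \<subseteq> K" for K
    proof -
      have cs: "csubspace K" using K unfolding closed_csubspace_def by simp
      have "C ` K \<subseteq> K"
        using DK by (auto simp: C_def intro!: csubspace_diff[OF cs] csubspace_scaleR[OF cs])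
      thus ?thesis
        using sqrt_id_minus_closed_csubspace[OF contraction K] csubspace_scaleR[OF cs]
        by (auto simp: S_def)
    qed
  qed
qed

lemma hermitian_form_zero_on_csubspace:
  fixes D :: "'a::chilbert \<Rightarrow> 'a"
  assumes D: "bounded_clinear D" and hD: "hermitian D" and K: "csubspace K" and DK: "D ` K \<subseteq> K"
    and form0: "\<And>x. x \<in> K \<Longrightarrow> Re (cinner (D x) x) = 0" and x: "x \<in> K"
  shows "D x = 0"
proof -
  let ?y = "D x"
  have y: "?y \<in> K" using DK x by auto
  have "Re (cinner (D ?y) x) = Re (cinner (D x) ?y)"
    using hD cinner_cnj_commute[of ?y "D x"] unfolding hermitian_def by simp
  hence "Re (cinner (D (x + ?y)) (x + ?y)) = Re (cinner (D x) x) + 2 * Re (cinner ?y ?y) + Re (cinner (D ?y) ?y)"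
    by (simp add: bounded_clinear_add[OF D] cinner_add_left cinner_add_right)
  hence "Re (cinner ?y ?y) = 0" using form0 x y csubspace_add[OF K x y] by simp
  thus ?thesis by (simp add: Re_cinner_self)
qed

lemma scaleC_solve_sum_diff:
  fixes p m u :: "'a::chilbert" and a b :: real
  assumes sum: "p + m = scaleC (of_real a) u" and diff: "scaleC \<i> (p - m) = scaleC (of_real b) u"
  shows "p = scaleC ((of_real a - \<i> * of_real b) / 2) u \<and> m = scaleC ((of_real a + \<i> * of_real b) / 2) u"
proof -
  have "p - m = scaleC (- \<i>) (scaleC \<i> (p - m))" by (simp add: scaleC_scaleC scaleC_one)
  hence "p - m = scaleC (- \<i> * of_real b) u" by (simp add: diff scaleC_scaleC)
  hence "scaleC 2 p = scaleC (of_real a - \<i> * of_real b) u"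
    using sum scaleC_add_left[of 1 1 p] scaleC_add_left[of "of_real a" "- \<i> * of_real b" u]
    by (simp add: scaleC_one algebra_simps)
  hence "scaleC (1/2) (scaleC 2 p) = scaleC (1/2) (scaleC (of_real a - \<i> * of_real b) u)" by simp
  hence p: "p = scaleC ((of_real a - \<i> * of_real b) / 2) u" by (simp add: scaleC_scaleC scaleC_one)
  have "m = scaleC (of_real a) u - scaleC ((of_real a - \<i> * of_real b) / 2) u"
    using sum p by (simp add: eq_diff_eq add.commute)
  also have "\<dots> = scaleC ((of_real a + \<i> * of_real b) / 2) u"
    by (simp add: scaleC_diff_left[symmetric] field_simps)
  finally show ?thesis using p by simp
qed

lemma rep_invariant_kernel:
  assumes VK: "rep_invariant G V K" and V: "\<And>g. g \<in> carrier G \<Longrightarrow> bounded_clinear (V g)"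
    and NV: "\<And>g x. g \<in> carrier G \<Longrightarrow> N (V g x) = V g (N x)"
  shows "rep_invariant G V {x\<in>K. N x = 0}"
  unfolding rep_invariant_def
proof (intro ballI subsetI)
  fix g y assume g: "g \<in> carrier G" and "y \<in> V g ` {x\<in>K. N x = 0}"
  then obtain x where "x \<in> K" "N x = 0" "y = V g x" by blast
  thus "y \<in> {x\<in>K. N x = 0}"
    using VK g NV[OF g] bounded_clinear_zero[OF V[OF g]] unfolding rep_invariant_def by auto
qed

context
  fixes G :: "('g, 'c) monoid_scheme" and V :: "'g \<Rightarrow> 'a::chilbert \<Rightarrow> 'a" and K :: "'a set"
  assumes irreducible: "irreducible_subrep G V K"
    and V_bounded: "\<And>g. g \<in> carrier G \<Longrightarrow> bounded_clinear (V g)"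
begin

text \<open>\<open>ker (\<bar>D\<bar> - D)\<close> is an invariant subspace containing the range of \<open>\<bar>D\<bar> + D\<close>.\<close>
lemma irreducible_hermitian_semidefinite:
  assumes D: "bounded_clinear D" and hD: "hermitian D" and DK: "D ` K \<subseteq> K"
    and comm: "\<And>g x. g \<in> carrier G \<Longrightarrow> D (V g x) = V g (D x)"
  shows "(\<forall>x\<in>K. 0 \<le> Re (cinner (D x) x)) \<or> (\<forall>x\<in>K. Re (cinner (D x) x) \<le> 0)"
proof -
  have K: "closed_csubspace K" and VK: "rep_invariant G V K"
    and minimal: "\<And>K'. closed_csubspace K' \<Longrightarrow> K' \<subseteq> K \<Longrightarrow> rep_invariant G V K' \<Longrightarrow> K' = {0} \<or> K' = K"
    using irreducible unfolding irreducible_subrep_def by blast+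
  have cs: "csubspace K" using K unfolding closed_csubspace_def by simp
  obtain S where S: "bounded_clinear S" "\<And>x. S (S x) = D (D x)" "\<And>x. 0 \<le> Re (cinner (S x) x)"
    "\<And>B x. bounded_clinear B \<Longrightarrow> (\<And>y. B (D y) = D (B y)) \<Longrightarrow> B (S x) = S (B x)"
    "\<And>K. closed_csubspace K \<Longrightarrow> D ` K \<subseteq> K \<Longrightarrow> S ` K \<subseteq> K"
    using hermitian_abs_exists[OF D hD] by blast
  have SK: "S ` K \<subseteq> K" by (rule S(5)[OF K DK])
  define N where "N x = S x - D x" for x
  have N: "bounded_clinear N" unfolding N_def by (rule bounded_clinear_diff_op[OF S(1) D])
  have NV: "N (V g x) = V g (N x)" if g: "g \<in> carrier G" for g x
    using S(4)[OF V_bounded[OF g]] comm[OF g] by (simp add: N_def bounded_clinear_diff[OF V_bounded[OF g]])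
  let ?ker = "{x\<in>K. N x = 0}"
  have "?ker = {0} \<or> ?ker = K"
    using minimal closed_csubspace_kernel[OF N K] rep_invariant_kernel[OF VK V_bounded NV] by blast
  thus ?thesis
  proof
    assume ker0: "?ker = {0}"
    have "S x + D x \<in> ?ker" if "x \<in> K" for x
      using SK DK that csubspace_add[OF cs]
      by (auto simp: N_def bounded_clinear_add[OF S(1)] bounded_clinear_add[OF D] S(2) S(4)[OF D])
    hence "D x = - S x" if "x \<in> K" for x
      using ker0 that by (auto simp: eq_neg_iff_add_eq_0 add.commute)
    thus ?thesis using S(3) by (simp add: cinner_minus_left)
  next
    assume "?ker = K"
    hence "D x = S x" if "x \<in> K" for x using that by (force simp: N_def)
    thus ?thesis using S(3) by simp
  qed
qed

lemma schur_hermitian: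
  assumes A: "bounded_clinear A" and hA: "hermitian A" and AK: "A ` K \<subseteq> K"
    and comm: "\<And>g x. g \<in> carrier G \<Longrightarrow> A (V g x) = V g (A x)"
  shows "\<exists>c. \<forall>x\<in>K. A x = c *\<^sub>R x"
proof -
  have K: "closed_csubspace K" and K0: "K \<noteq> {0}"
    using irreducible unfolding irreducible_subrep_def by blast+
  have cs: "csubspace K" using K unfolding closed_csubspace_def by simp
  obtain x0 where x0: "x0 \<in> K" "x0 \<noteq> 0" using K0 csubspace_0[OF cs] by blast
  define q where "q x = Re (cinner (A x) x) / (norm x)\<^sup>2" for x
  let ?D = "\<lambda>r x. A x - r *\<^sub>R x"
  have D: "bounded_clinear (?D r)" for r
    by (intro bounded_clinear_diff_op A bounded_clinear_scaleR_op bounded_clinear_ident)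
  have form: "Re (cinner (?D r x) x) = (q x - r) * (norm x)\<^sup>2" if "x \<noteq> 0" for r x
    using that by (simp add: q_def cinner_diff_left cinner_scaleR_left Re_cinner_self field_simps)
  have "?D r ` K \<subseteq> K" for r
    using AK by (auto intro!: csubspace_diff[OF cs] csubspace_scaleR[OF cs])
  \<comment> \<open>for \<open>r\<close> strictly between \<open>q x\<close> and \<open>q x\<^sub>0\<close> the form of \<open>A - r\<close> would be indefinite on \<open>K\<close>\<close>
  moreover have "q x = q x0" if x: "x \<in> K" "x \<noteq> 0" for x
  proof (rule ccontr)
    assume "q x \<noteq> q x0"
    define r where "r = (q x + q x0) / 2"
    have "(q x - r) * (q x0 - r) < 0" using \<open>q x \<noteq> q x0\<close> unfolding r_def
      by (simp add: mult_less_0_iff) linarith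
    hence "Re (cinner (?D r x) x) * Re (cinner (?D r x0) x0) < 0"
      using x x0 by (simp add: form mult_less_0_iff zero_less_mult_iff)
    moreover have "(\<forall>y\<in>K. 0 \<le> Re (cinner (?D r y) y)) \<or> (\<forall>y\<in>K. Re (cinner (?D r y) y) \<le> 0)"
      using \<open>?D r ` K \<subseteq> K\<close>
      by (intro irreducible_hermitian_semidefinite D hermitian_sub_scaleR hA)
         (simp_all add: comm bounded_clinear_diff[OF V_bounded] bounded_clinear_scaleR[OF V_bounded])
    ultimately show False using x(1) x0(1) by (auto simp: mult_less_0_iff)
  qed
  hence "Re (cinner (?D (q x0) x) x) = 0" if "x \<in> K" for x
    using that form by (cases "x = 0") simp_all
  ultimately have "?D (q x0) x = 0" if "x \<in> K" for x
    using hermitian_form_zero_on_csubspace[OF D hermitian_sub_scaleR[OF hA] cs] that by blast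
  thus ?thesis by auto
qed

lemma schur_adjoint_pair:
  assumes B: "bounded_clinear B" and B': "bounded_clinear B'"
    and adjoint: "\<And>x y. cinner (B x) y = cinner x (B' y)"
    and BK: "B ` K \<subseteq> K" and B'K: "B' ` K \<subseteq> K"
    and comm: "\<And>g x. g \<in> carrier G \<Longrightarrow> B (V g x) = V g (B x)"
    and comm': "\<And>g x. g \<in> carrier G \<Longrightarrow> B' (V g x) = V g (B' x)"
  shows "\<exists>\<beta>. \<forall>u\<in>K. B u = scaleC \<beta> u \<and> B' u = scaleC (cnj \<beta>) u"
proof -
  have cs: "csubspace K" using irreducible unfolding irreducible_subrep_def closed_csubspace_def by blast
  have adjoint': "cinner (B' x) y = cinner x (B y)" for x y
    using adjoint[of y x] cinner_cnj_commute[of "B' x" y] cinner_cnj_commute[of x "B y"] by simp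
  \<comment> \<open>the real and imaginary parts \<open>B + B'\<close> and \<open>i(B - B')\<close> are hermitian\<close>
  have "\<exists>a. \<forall>u\<in>K. B u + B' u = a *\<^sub>R u"
  proof (rule schur_hermitian[OF bounded_clinear_add_op[OF B B']])
    show "hermitian (\<lambda>x. B x + B' x)"
      unfolding hermitian_def by (simp add: cinner_add_left cinner_add_right adjoint adjoint' add.commute)
    show "(\<lambda>x. B x + B' x) ` K \<subseteq> K" using BK B'K by (auto intro: csubspace_add[OF cs])
    show "B (V g x) + B' (V g x) = V g (B x + B' x)" if "g \<in> carrier G" for g x
      using that by (simp add: comm comm' bounded_clinear_add[OF V_bounded])
  qed
  then obtain a where a: "\<And>u. u \<in> K \<Longrightarrow> B u + B' u = scaleC (of_real a) u"
    by (auto simp: scaleR_scaleC)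
  have "\<exists>b. \<forall>u\<in>K. scaleC \<i> (B u - B' u) = b *\<^sub>R u"
  proof (rule schur_hermitian[OF bounded_clinear_scaleC_op[OF bounded_clinear_diff_op[OF B B']]])
    show "hermitian (\<lambda>x. scaleC \<i> (B x - B' x))"
      unfolding hermitian_def by (simp add: cinner_simps adjoint adjoint' algebra_simps)
    show "(\<lambda>x. scaleC \<i> (B x - B' x)) ` K \<subseteq> K"
      using BK B'K by (auto intro!: csubspace_scaleC[OF cs] csubspace_diff[OF cs])
    show "scaleC \<i> (B (V g x) - B' (V g x)) = V g (scaleC \<i> (B x - B' x))" if "g \<in> carrier G" for g x
      using that by (simp add: comm comm' bounded_clinear_diff[OF V_bounded] bounded_clinear_scaleC[OF V_bounded])
  qed
  then obtain b where b: "\<And>u. u \<in> K \<Longrightarrow> scaleC \<i> (B u - B' u) = scaleC (of_real b) u"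
    by (auto simp: scaleR_scaleC)
  define \<beta> where "\<beta> = (of_real a - \<i> * of_real b) / (2::complex)"
  have "cnj \<beta> = (of_real a + \<i> * of_real b) / 2" by (simp add: \<beta>_def)
  thus ?thesis using scaleC_solve_sum_diff[OF a b] by (auto simp: \<beta>_def)
qed

lemma schur_compression:
  assumes P: "bounded_clinear P" "hermitian P" and PK: "\<And>x. P x \<in> K" and P_id: "\<And>u. u \<in> K \<Longrightarrow> P u = u"
    and PV: "\<And>g x. g \<in> carrier G \<Longrightarrow> P (V g x) = V g (P x)"
    and A: "bounded_clinear A" "hermitian A" and AV: "\<And>g x. g \<in> carrier G \<Longrightarrow> A (V g x) = V g (A x)"
  obtains c where "\<And>u. u \<in> K \<Longrightarrow> P (A u) = c *\<^sub>R u"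
proof -
  have "\<exists>c. \<forall>u\<in>K. P (A (P u)) = c *\<^sub>R u"
  proof (rule schur_hermitian)
    show "bounded_clinear (\<lambda>x. P (A (P x)))"
      by (intro bounded_clinear_compose[OF P(1)] bounded_clinear_compose[OF A(1) P(1)])
    show "hermitian (\<lambda>x. P (A (P x)))"
      unfolding hermitian_def by (intro allI) (simp only: hermitianD[OF P(2)] hermitianD[OF A(2)])
  qed (use PK in \<open>auto simp: PV AV\<close>)
  thus ?thesis using that P_id by force
qed

end

section \<open>Orthogonal complements\<close>

lemma norm_diff_le_infdist:
  fixes M :: "'a::chilbert set"
  assumes M: "csubspace M" and u: "u \<in> M" and v: "v \<in> M"
  shows "(norm (u - v))\<^sup>2 \<le> 2 * (norm (z - u))\<^sup>2 + 2 * (norm (z - v))\<^sup>2 - 4 * (infdist z M)\<^sup>2"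
proof -
  let ?c = "(1/2::real) *\<^sub>R (u + v)"
  have "?c \<in> M" by (intro csubspace_scaleR csubspace_add M u v)
  hence "infdist z M \<le> norm (z - ?c)" using infdist_le[of ?c M z] by (simp add: dist_norm)
  hence "(infdist z M)\<^sup>2 \<le> (norm (z - ?c))\<^sup>2" by (simp add: infdist_nonneg power_mono)
  moreover have "(z - u) + (z - v) = 2 *\<^sub>R (z - ?c)" by (simp add: algebra_simps scaleR_2)
  hence "(norm ((z - u) + (z - v)))\<^sup>2 = 4 * (norm (z - ?c))\<^sup>2" by (simp add: power_mult_distrib)
  moreover have "(norm ((z - u) - (z - v)))\<^sup>2 = (norm (u - v))\<^sup>2"
    using norm_minus_commute[of v u] by simp
  ultimately show ?thesis using parallelogram_law[of "z - u" "z - v"] by linarith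
qed

text \<open>By the parallelogram law.\<close>
lemma minimising_sequence_Cauchy:
  fixes M :: "'a::chilbert set"
  assumes M: "csubspace M" and m: "\<And>n. m n \<in> M" "\<And>n. norm (z - m n) < infdist z M + 1 / (real n + 1)"
  shows "Cauchy m"
proof (rule CauchyI)
  fix e :: real assume e: "0 < e"
  define d where "d = infdist z M"
  have d0: "0 \<le> d" by (simp add: d_def infdist_nonneg)
  obtain N :: nat where N: "(8 * d + 4) / e\<^sup>2 < real N" using reals_Archimedean2 by blast
  have "norm (m p - m q) < e" if "N \<le> p" "N \<le> q" for p q
  proof -
    define \<delta> where "\<delta> = 1 / (real N + 1)"
    have \<delta>: "0 < \<delta>" "\<delta> \<le> 1" unfolding \<delta>_def by (auto simp: field_simps)
    have "1 / (real p + 1) \<le> \<delta>" "1 / (real q + 1) \<le> \<delta>"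
      unfolding \<delta>_def using that by (auto intro!: divide_left_mono)
    hence "norm (z - m p) \<le> d + \<delta>" "norm (z - m q) \<le> d + \<delta>"
      using m(2)[of p] m(2)[of q] unfolding d_def by linarith+
    hence "(norm (z - m p))\<^sup>2 \<le> (d + \<delta>)\<^sup>2" "(norm (z - m q))\<^sup>2 \<le> (d + \<delta>)\<^sup>2"
      by (auto intro: power_mono)
    hence "(norm (m p - m q))\<^sup>2 \<le> 4 * (d + \<delta>)\<^sup>2 - 4 * d\<^sup>2"
      using norm_diff_le_infdist[OF M m(1) m(1), of p q z] unfolding d_def by linarith
    also have "\<dots> \<le> (8 * d + 4) * \<delta>"
      using \<delta> d0 by (simp add: power2_eq_square algebra_simps)
    also have "\<dots> < e\<^sup>2"
    proof -
      have "8 * d + 4 < real N * e\<^sup>2" using N e by (simp add: pos_divide_less_eq)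
      moreover have "0 < e\<^sup>2" using e by simp
      ultimately have "8 * d + 4 < real N * e\<^sup>2 + e\<^sup>2" by linarith
      thus ?thesis by (simp add: \<delta>_def field_simps)
    qed
    finally show ?thesis using e by (simp add: power_less_imp_less_base)
  qed
  thus "\<exists>N. \<forall>p\<ge>N. \<forall>q\<ge>N. norm (m p - m q) < e" by blast
qed

lemma closed_csubspace_nearest_point:
  fixes M :: "'a::chilbert set"
  assumes M: "closed_csubspace M"
  obtains m0 where "m0 \<in> M" "\<And>m. m \<in> M \<Longrightarrow> norm (z - m0) \<le> norm (z - m)"
proof -
  have cs: "csubspace M" and cl: "closed M" using M unfolding closed_csubspace_def by auto
  define d where "d = infdist z M"
  have "\<exists>m\<in>M. dist z m < d + 1 / (real n + 1)" for n
    using csubspace_0[OF cs] infdist_notempty[of M z]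
      cINF_less_iff[of M "dist z" "d + 1 / (real n + 1)"]
    by (fastforce simp: d_def)
  then obtain m where m: "\<And>n. m n \<in> M" "\<And>n. norm (z - m n) < d + 1 / (real n + 1)"
    unfolding dist_norm by metis
  hence "Cauchy m" by (intro minimising_sequence_Cauchy[OF cs]) (simp_all add: d_def)
  then obtain m0 where lim: "m \<longlonglongrightarrow> m0" using Cauchy_convergent_iff convergent_def by blast
  have m0: "m0 \<in> M" by (rule Lim_in_closed_set[OF cl _ _ lim]) (auto simp: m(1))
  have "(\<lambda>n. norm (z - m n)) \<longlonglongrightarrow> norm (z - m0)" by (intro tendsto_norm tendsto_diff tendsto_const lim)
  moreover have "(\<lambda>n. d + 1 / (real n + 1)) \<longlonglongrightarrow> d + 0"
    by (intro tendsto_add tendsto_const)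
       (use LIMSEQ_inverse_real_of_nat in \<open>simp add: inverse_eq_divide add.commute\<close>)
  ultimately have "norm (z - m0) \<le> d"
    using m(2) by (intro LIMSEQ_le[where X="\<lambda>n. norm (z - m n)"]) (auto intro: less_imp_le)
  moreover have "d \<le> norm (z - m')" if "m' \<in> M" for m'
    using infdist_le[OF that, of z] by (simp add: d_def dist_norm)
  ultimately show ?thesis using that m0 by force
qed

lemma nearest_point_orthogonal:
  fixes M :: "'a::chilbert set"
  assumes M: "csubspace M" and m0: "m0 \<in> M" and nearest: "\<And>m. m \<in> M \<Longrightarrow> norm (z - m0) \<le> norm (z - m)"
    and u: "u \<in> M"
  shows "cinner u (z - m0) = 0"
proof (cases "u = 0")
  case False
  define y where "y = z - m0"
  define t where "t = cinner u y / of_real ((norm u)\<^sup>2)"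
  define w where "w = y - scaleC t u"
  have "cinner u w = 0" using False
    by (simp add: w_def t_def cinner_diff_right cinner_scaleC_right cinner_self_eq_norm)
  hence "cinner w (scaleC t u) = 0"
    using cinner_cnj_commute[of w "scaleC t u"] by (simp add: cinner_scaleC_left)
  hence "(norm y)\<^sup>2 = (norm w)\<^sup>2 + (norm (scaleC t u))\<^sup>2"
    using norm_add_square_orthogonal[of w "scaleC t u"] by (simp add: w_def)
  moreover have "norm y \<le> norm w"
    using nearest[OF csubspace_add[OF M m0 csubspace_scaleC[OF M u]]]
    by (simp add: w_def y_def algebra_simps)
  hence "(norm y)\<^sup>2 \<le> (norm w)\<^sup>2" by (simp add: power_mono)
  ultimately have "norm (scaleC t u) = 0" by simp
  thus ?thesis using False by (simp add: norm_scaleC t_def y_def)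
qed simp

lemma proper_closed_csubspace_orthogonal:
  fixes M :: "'a::chilbert set"
  assumes M: "closed_csubspace M" and proper: "M \<noteq> UNIV"
  obtains y where "y \<noteq> 0" "\<And>m. m \<in> M \<Longrightarrow> cinner m y = 0"
proof -
  obtain z where z: "z \<notin> M" using proper by blast
  obtain m0 where "m0 \<in> M" "\<And>m. m \<in> M \<Longrightarrow> norm (z - m0) \<le> norm (z - m)"
    using closed_csubspace_nearest_point[OF M, of z] by blast
  moreover have "csubspace M" using M unfolding closed_csubspace_def by simp
  ultimately show ?thesis
    using that[of "z - m0"] nearest_point_orthogonal z by force
qed

section \<open>Resolvents of a self-adjoint operator\<close>

lemma Cauchy_dominated:
  fixes X :: "nat \<Rightarrow> 'a::real_normed_vector" and Y :: "nat \<Rightarrow> 'b::real_normed_vector"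
  assumes Y: "Cauchy Y" and dom: "\<And>p q. norm (X p - X q) \<le> c * norm (Y p - Y q)"
  shows "Cauchy X"
proof (rule CauchyI)
  fix e :: real assume e: "0 < e"
  obtain M where M: "\<forall>m\<ge>M. \<forall>n\<ge>M. norm (Y m - Y n) < e / (\<bar>c\<bar> + 1)"
    using CauchyD[OF Y, of "e / (\<bar>c\<bar> + 1)"] e by auto
  have "norm (X m - X n) < e" if "M \<le> m" "M \<le> n" for m n
  proof -
    have "norm (X m - X n) \<le> (\<bar>c\<bar> + 1) * norm (Y m - Y n)"
      using dom[of m n] by (smt (verit) mult_right_mono norm_ge_zero)
    also have "\<dots> < e" using M that by (simp add: field_simps)
    finally show ?thesis .
  qed
  thus "\<exists>M. \<forall>m\<ge>M. \<forall>n\<ge>M. norm (X m - X n) < e" by blast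
qed

locale selfadjoint_operator =
  fixes D :: "'a::chilbert set" and T :: "'a \<Rightarrow> 'a"
  assumes densely_defined: "densely_defined D T" and self_adjoint: "self_adjoint D T"
begin

lemma csubspace_domain: "csubspace D"
  using densely_defined unfolding densely_defined_def by simp

lemma add: "x \<in> D \<Longrightarrow> y \<in> D \<Longrightarrow> T (x + y) = T x + T y"
  using densely_defined unfolding densely_defined_def clinear_on_def by blast

lemma scaleC: "x \<in> D \<Longrightarrow> T (scaleC c x) = scaleC c (T x)"
  using densely_defined unfolding densely_defined_def clinear_on_def by blast

lemma zero: "T 0 = 0"
  using scaleC[OF csubspace_0[OF csubspace_domain], of 0] by simp

lemma diff: "x \<in> D \<Longrightarrow> y \<in> D \<Longrightarrow> T (x - y) = T x - T y"
  using add[of x "- y"] scaleC[of y "-1"] csubspace_minus[OF csubspace_domain, of y]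
  by (simp add: scaleC_minus1)

lemma symmetric: "x \<in> D \<Longrightarrow> y \<in> D \<Longrightarrow> cinner (T x) y = cinner x (T y)"
  using self_adjoint unfolding self_adjoint_def by blast

lemma in_domainI:
  assumes "\<And>x. x \<in> D \<Longrightarrow> cinner (T x) y = cinner x z"
  shows "y \<in> D" and "T y = z"
proof -
  show y: "y \<in> D"
    using assms self_adjoint unfolding self_adjoint_def adjoint_domain_def by blast
  have "cinner x (T y - z) = 0" if "x \<in> D" for x
    using assms[OF that] symmetric[OF that y] by (simp add: cinner_diff_right)
  hence "T y - z = 0"
    using densely_defined unfolding densely_defined_def by (intro orthogonal_to_dense_eq_0) auto
  thus "T y = z" by simp
qed

lemma closed_graph:
  assumes xs: "\<And>n. xs n \<in> D" and x: "xs \<longlonglongrightarrow> x" and w: "(\<lambda>n. T (xs n)) \<longlonglongrightarrow> w"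
  shows "x \<in> D" and "T x = w"
proof -
  have adjoint: "cinner (T u) x = cinner u w" if u: "u \<in> D" for u
  proof (rule LIMSEQ_unique)
    show "(\<lambda>n. cinner (T u) (xs n)) \<longlonglongrightarrow> cinner (T u) x"
      by (rule bounded_linear.tendsto[OF bounded_linear_cinner_right x])
    show "(\<lambda>n. cinner (T u) (xs n)) \<longlonglongrightarrow> cinner u w"
      using bounded_linear.tendsto[OF bounded_linear_cinner_right w, of u] symmetric[OF u xs] by simp
  qed
  show "x \<in> D" "T x = w" using in_domainI[OF adjoint] by blast+
qed

lemma norm_shift_square:
  assumes x: "x \<in> D"
  shows "(norm (T x + scaleC (\<i> * of_real e) x))\<^sup>2 = (norm (T x))\<^sup>2 + e\<^sup>2 * (norm x)\<^sup>2"
proof -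
  let ?c = "\<i> * complex_of_real e"
  have "cinner x (T x) = cinner (T x) x" using symmetric[OF x x] by simp
  hence "cinner (T x + scaleC ?c x) (T x + scaleC ?c x)
      = cinner (T x) (T x) + (?c + cnj ?c) * cinner (T x) x + cnj ?c * ?c * cinner x x"
    by (simp add: cinner_add_left cinner_add_right cinner_scaleC_left cinner_scaleC_right algebra_simps)
  also have "\<dots> = cinner (T x) (T x) + of_real (e\<^sup>2) * cinner x x"
    by (simp add: complex_eq_iff power2_eq_square)
  finally have "cinner (T x + scaleC ?c x) (T x + scaleC ?c x)
      = cinner (T x) (T x) + of_real (e\<^sup>2) * cinner x x" .
  hence "Re (cinner (T x + scaleC (\<i> * of_real e) x) (T x + scaleC (\<i> * of_real e) x))
      = Re (cinner (T x) (T x)) + e\<^sup>2 * Re (cinner x x)"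
    by simp
  thus ?thesis by (simp add: Re_cinner_self)
qed

lemma norm_le_norm_shift: "x \<in> D \<Longrightarrow> norm (T x) \<le> norm (T x + scaleC (\<i> * of_real e) x)"
  by (rule power2_le_imp_le) (simp_all add: norm_shift_square)

lemma abs_mult_norm_le_norm_shift: "x \<in> D \<Longrightarrow> \<bar>e\<bar> * norm x \<le> norm (T x + scaleC (\<i> * of_real e) x)"
  by (rule power2_le_imp_le) (simp_all add: norm_shift_square power_mult_distrib)

lemma shift_diff: "x \<in> D \<Longrightarrow> y \<in> D \<Longrightarrow>
    (T x + scaleC c x) - (T y + scaleC c y) = T (x - y) + scaleC c (x - y)"
  by (simp add: diff scaleC_diff_right algebra_simps)

lemma closed_shift_range:
  assumes e: "e \<noteq> 0"
  shows "closed ((\<lambda>x. T x + scaleC (\<i> * of_real e) x) ` D)"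
  unfolding closed_sequential_limits
proof (intro allI impI, elim conjE)
  fix ys l assume ys: "\<forall>n. ys n \<in> (\<lambda>x. T x + scaleC (\<i> * of_real e) x) ` D" and lim: "ys \<longlonglongrightarrow> l"
  have "\<forall>n. \<exists>x. x \<in> D \<and> ys n = T x + scaleC (\<i> * of_real e) x" using ys by blast
  then obtain xs where "\<forall>n. xs n \<in> D \<and> ys n = T (xs n) + scaleC (\<i> * of_real e) (xs n)"
    by (rule choice[THEN exE])
  hence xs: "\<And>n. xs n \<in> D" "\<And>n. ys n = T (xs n) + scaleC (\<i> * of_real e) (xs n)" by auto
  have shift: "ys p - ys q = T (xs p - xs q) + scaleC (\<i> * of_real e) (xs p - xs q)" for p q
    using shift_diff[OF xs(1) xs(1)] xs(2) by simp
  have Dpq: "xs p - xs q \<in> D" for p q by (intro csubspace_diff csubspace_domain xs(1))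
  have "Cauchy xs"
  proof (rule Cauchy_dominated[OF LIMSEQ_imp_Cauchy[OF lim]])
    show "norm (xs p - xs q) \<le> (1 / \<bar>e\<bar>) * norm (ys p - ys q)" for p q
      using abs_mult_norm_le_norm_shift[OF Dpq[of p q], of e] e by (simp add: shift field_simps)
  qed
  then obtain x where x: "xs \<longlonglongrightarrow> x" using Cauchy_convergent_iff convergent_def by blast
  have "Cauchy (\<lambda>n. T (xs n))"
  proof (rule Cauchy_dominated[OF LIMSEQ_imp_Cauchy[OF lim]])
    show "norm (T (xs p) - T (xs q)) \<le> 1 * norm (ys p - ys q)" for p q
      using norm_le_norm_shift[OF Dpq[of p q], of e] diff[OF xs(1) xs(1)] by (simp add: shift)
  qed
  then obtain w where w: "(\<lambda>n. T (xs n)) \<longlonglongrightarrow> w" using Cauchy_convergent_iff convergent_def by blast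
  have "ys \<longlonglongrightarrow> w + scaleC (\<i> * of_real e) x"
    unfolding xs(2) by (intro tendsto_add w bounded_linear.tendsto[OF bounded_linear_scaleC x])
  hence "l = T x + scaleC (\<i> * of_real e) x" using LIMSEQ_unique[OF lim] closed_graph[OF xs(1) x w] by simp
  thus "l \<in> (\<lambda>x. T x + scaleC (\<i> * of_real e) x) ` D" using closed_graph[OF xs(1) x w] by blast
qed

lemma csubspace_shift_range: "csubspace ((\<lambda>x. T x + scaleC c x) ` D)"
  unfolding csubspace_def
proof (intro conjI ballI allI)
  show "0 \<in> (\<lambda>x. T x + scaleC c x) ` D" using csubspace_0[OF csubspace_domain] zero by force
  fix u v assume "u \<in> (\<lambda>x. T x + scaleC c x) ` D" "v \<in> (\<lambda>x. T x + scaleC c x) ` D"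
  then obtain x y where "x \<in> D" "y \<in> D" "u = T x + scaleC c x" "v = T y + scaleC c y" by blast
  thus "u + v \<in> (\<lambda>x. T x + scaleC c x) ` D"
    using csubspace_add[OF csubspace_domain]
    by (intro image_eqI[of _ _ "x + y"]) (simp_all add: add scaleC_add_right algebra_simps)
next
  fix a u assume "u \<in> (\<lambda>x. T x + scaleC c x) ` D"
  then obtain x where "x \<in> D" "u = T x + scaleC c x" by blast
  thus "scaleC a u \<in> (\<lambda>x. T x + scaleC c x) ` D"
    using csubspace_scaleC[OF csubspace_domain]
    by (intro image_eqI[of _ _ "scaleC a x"]) (simp_all add: scaleC scaleC_add_right scaleC_scaleC mult.commute)
qed

text \<open>A vector orthogonal to the range would be an eigenvector of \<open>T\<close> with eigenvalue \<open>-\<i> e\<close>.\<close>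
lemma shift_range_eq_UNIV:
  assumes e: "e \<noteq> 0"
  shows "(\<lambda>x. T x + scaleC (\<i> * of_real e) x) ` D = UNIV"
proof (rule ccontr)
  assume proper: "(\<lambda>x. T x + scaleC (\<i> * of_real e) x) ` D \<noteq> UNIV"
  have "closed_csubspace ((\<lambda>x. T x + scaleC (\<i> * of_real e) x) ` D)"
    unfolding closed_csubspace_def using csubspace_shift_range closed_shift_range[OF e] by blast
  then obtain y where y: "y \<noteq> 0"
    "\<And>m. m \<in> (\<lambda>x. T x + scaleC (\<i> * of_real e) x) ` D \<Longrightarrow> cinner m y = 0"
    using proper_closed_csubspace_orthogonal[OF _ proper] by blast
  have adjoint: "cinner (T x) y = cinner x (scaleC (\<i> * of_real e) y)" if "x \<in> D" for x
  proof -
    have "cinner (T x) y + cnj (\<i> * of_real e) * cinner x y = 0"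
      using y(2)[OF imageI[OF that]] by (simp only: cinner_add_left cinner_scaleC_left)
    hence "cinner (T x) y = - (cnj (\<i> * of_real e) * cinner x y)" by (simp add: eq_neg_iff_add_eq_0)
    thus ?thesis by (simp add: cinner_scaleC_right)
  qed
  have yD: "y \<in> D" and Ty: "T y = scaleC (\<i> * of_real e) y" using in_domainI[OF adjoint] by blast+
  have "cinner (T y) y = cinner y (T y)" by (rule symmetric[OF yD yD])
  hence "cnj (\<i> * of_real e) * cinner y y = (\<i> * of_real e) * cinner y y"
    by (simp only: Ty cinner_scaleC_left cinner_scaleC_right)
  hence "(\<i> * of_real e + \<i> * of_real e) * cinner y y = 0" by (simp add: algebra_simps)
  thus False using e y(1) by simp
qed

definition resolvent :: "real \<Rightarrow> 'a \<Rightarrow> 'a" where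
  "resolvent e y = (THE x. x \<in> D \<and> T x + scaleC (\<i> * of_real e) x = y)"

lemma resolvent_unique:
  assumes e: "e \<noteq> 0" and x: "x \<in> D" and x': "x' \<in> D"
    and eq: "T x + scaleC (\<i> * of_real e) x = T x' + scaleC (\<i> * of_real e) x'"
  shows "x = x'"
proof -
  have xd: "x - x' \<in> D" by (intro csubspace_diff csubspace_domain x x')
  have "T (x - x') + scaleC (\<i> * of_real e) (x - x') = 0"
    using shift_diff[OF x x', of "\<i> * of_real e"] eq by simp
  hence "\<bar>e\<bar> * norm (x - x') \<le> 0" using abs_mult_norm_le_norm_shift[OF xd, of e] by simp
  thus ?thesis using e by (simp add: mult_le_0_iff)
qed

lemma resolvent:
  assumes e: "e \<noteq> 0"
  shows "resolvent e y \<in> D" "T (resolvent e y) + scaleC (\<i> * of_real e) (resolvent e y) = y"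
proof -
  have "y \<in> (\<lambda>x. T x + scaleC (\<i> * of_real e) x) ` D" using shift_range_eq_UNIV[OF e] by simp
  then obtain x where x: "x \<in> D" "T x + scaleC (\<i> * of_real e) x = y" by blast
  hence "\<exists>!x. x \<in> D \<and> T x + scaleC (\<i> * of_real e) x = y" using resolvent_unique[OF e] by blast
  hence "resolvent e y \<in> D \<and> T (resolvent e y) + scaleC (\<i> * of_real e) (resolvent e y) = y"
    unfolding resolvent_def by (rule theI')
  thus "resolvent e y \<in> D" "T (resolvent e y) + scaleC (\<i> * of_real e) (resolvent e y) = y" by auto
qed

lemma resolvent_shift:
  assumes e: "e \<noteq> 0" and x: "x \<in> D"
  shows "resolvent e (T x + scaleC (\<i> * of_real e) x) = x"
  by (rule resolvent_unique[OF e resolvent(1)[OF e] x]) (simp add: resolvent(2)[OF e])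

lemma norm_resolvent_le: "norm (resolvent 1 y) \<le> norm y"
  using abs_mult_norm_le_norm_shift[OF resolvent(1)[of 1 y], of 1] resolvent(2)[of 1 y] by simp

lemma bounded_clinear_resolvent:
  assumes e: "e \<noteq> 0"
  shows "bounded_clinear (resolvent e)"
proof (rule bounded_clinearI[where K="1 / \<bar>e\<bar>"])
  note R = resolvent[OF e]
  show "resolvent e (x + y) = resolvent e x + resolvent e y" for x y
  proof -
    have "T (resolvent e x + resolvent e y) + scaleC (\<i> * of_real e) (resolvent e x + resolvent e y)
        = (T (resolvent e x) + scaleC (\<i> * of_real e) (resolvent e x))
          + (T (resolvent e y) + scaleC (\<i> * of_real e) (resolvent e y))"
      by (simp add: add[OF R(1) R(1)] scaleC_add_right add_ac)
    also have "\<dots> = x + y" by (simp only: R(2))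
    finally have "T (resolvent e x + resolvent e y) + scaleC (\<i> * of_real e) (resolvent e x + resolvent e y)
        = x + y" .
    thus ?thesis
      using resolvent_shift[OF e csubspace_add[OF csubspace_domain R(1) R(1)], of x y] by simp
  qed
  show "resolvent e (scaleC c x) = scaleC c (resolvent e x)" for c x
  proof -
    have "T (scaleC c (resolvent e x)) + scaleC (\<i> * of_real e) (scaleC c (resolvent e x))
        = scaleC c (T (resolvent e x) + scaleC (\<i> * of_real e) (resolvent e x))"
      by (simp only: scaleC[OF R(1)] scaleC_scaleC mult.commute scaleC_add_right)
    thus ?thesis
      using resolvent_shift[OF e csubspace_scaleC[OF csubspace_domain R(1)], of c x] R(2)[of x] by simp
  qed
  show "norm (resolvent e x) \<le> norm x * (1 / \<bar>e\<bar>)" for x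
    using abs_mult_norm_le_norm_shift[OF R(1), of e x] R(2)[of x] e by (simp add: field_simps)
qed

lemma resolvent_commute:
  assumes e: "e \<noteq> 0" and B: "bounded_clinear B" and BD: "\<And>x. x \<in> D \<Longrightarrow> B x \<in> D"
    and BT: "\<And>x. x \<in> D \<Longrightarrow> T (B x) = B (T x)"
  shows "B (resolvent e y) = resolvent e (B y)"
proof -
  note R = resolvent[OF e, of y]
  have "T (B (resolvent e y)) + scaleC (\<i> * of_real e) (B (resolvent e y))
      = B (T (resolvent e y) + scaleC (\<i> * of_real e) (resolvent e y))"
    by (simp add: BT[OF R(1)] bounded_clinear_scaleC[OF B] bounded_clinear_add[OF B])
  thus ?thesis using resolvent_shift[OF e BD[OF R(1)]] R(2) by simp
qed

text \<open>\<open>(T - \<i>)\<^sup>-\<^sup>1 (T + \<i>)\<^sup>-\<^sup>1 = (1 + T\<^sup>2)\<^sup>-\<^sup>1\<close>\<close>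
definition inverse_one_plus_square :: "'a \<Rightarrow> 'a" where
  "inverse_one_plus_square y = resolvent (-1) (resolvent 1 y)"

lemma cinner_inverse_one_plus_square:
  "cinner (inverse_one_plus_square y) z = cinner (resolvent 1 y) (resolvent 1 z)"
proof -
  let ?w = "inverse_one_plus_square y" and ?r = "resolvent 1 z"
  have wD: "?w \<in> D" and w: "T ?w + scaleC (- \<i>) ?w = resolvent 1 y"
    unfolding inverse_one_plus_square_def using resolvent[of "-1"] by auto
  have rD: "?r \<in> D" and r: "T ?r + scaleC \<i> ?r = z" using resolvent[of 1] by auto
  have "cinner ?w z = cinner ?w (T ?r + scaleC \<i> ?r)" by (simp only: r)
  also have "\<dots> = cinner ?w (T ?r) + \<i> * cinner ?w ?r"
    by (simp add: cinner_add_right cinner_scaleC_right)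
  also have "\<dots> = cinner (T ?w + scaleC (- \<i>) ?w) ?r"
    by (simp add: symmetric[OF wD rD] cinner_add_left cinner_scaleC_left)
  finally show ?thesis by (simp only: w)
qed

lemma bounded_clinear_inverse_one_plus_square: "bounded_clinear inverse_one_plus_square"
  unfolding inverse_one_plus_square_def[abs_def]
  by (rule bounded_clinear_compose[OF bounded_clinear_resolvent bounded_clinear_resolvent]) simp_all

lemma hermitian_inverse_one_plus_square: "hermitian inverse_one_plus_square"
  unfolding hermitian_def
proof (intro allI)
  fix x y
  have "cinner x (inverse_one_plus_square y) = cnj (cinner (resolvent 1 y) (resolvent 1 x))"
    by (subst cinner_cnj_commute) (simp add: cinner_inverse_one_plus_square)
  thus "cinner (inverse_one_plus_square x) y = cinner x (inverse_one_plus_square y)"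
    by (simp add: cinner_inverse_one_plus_square cinner_cnj_commute[of "resolvent 1 y"])
qed

lemma inverse_one_plus_square_eq_0: "inverse_one_plus_square y = 0 \<Longrightarrow> y = 0"
  using cinner_inverse_one_plus_square[of y y] resolvent(2)[of 1 y] by (simp add: zero)

lemma norm_inverse_one_plus_square_le: "norm (inverse_one_plus_square y) \<le> norm (resolvent 1 y)"
proof -
  let ?A = "inverse_one_plus_square y"
  have "(norm ?A)\<^sup>2 = Re (cinner (resolvent 1 y) (resolvent 1 ?A))"
    by (simp add: Re_cinner_self[symmetric] cinner_inverse_one_plus_square)
  also have "\<dots> \<le> norm (resolvent 1 y) * norm (resolvent 1 ?A)"
    using abs_Re_cinner_le by (rule abs_le_D1)
  also have "\<dots> \<le> norm (resolvent 1 y) * norm ?A" by (intro mult_left_mono norm_resolvent_le) simp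
  finally show ?thesis by (cases "norm ?A = 0") (auto simp: power2_eq_square)
qed

end

section \<open>The commutant of \<open>V\<^sub>1 \<oplus> V\<^sub>2\<close> for equivalent irreducible \<open>V\<^sub>1, V\<^sub>2\<close>\<close>

locale orthogonal_sum =
  fixes H1 H2 :: "'a::chilbert set"
  assumes closed_csubspace1: "closed_csubspace H1" and closed_csubspace2: "closed_csubspace H2"
    and orthogonal: "\<And>x y. x \<in> H1 \<Longrightarrow> y \<in> H2 \<Longrightarrow> cinner x y = 0"
    and sum_eq_UNIV: "\<And>x. \<exists>u v. u \<in> H1 \<and> v \<in> H2 \<and> x = u + v"
begin

lemma csubspace1: "csubspace H1" using closed_csubspace1 unfolding closed_csubspace_def by simp
lemma csubspace2: "csubspace H2" using closed_csubspace2 unfolding closed_csubspace_def by simp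

lemma orthogonal': "x \<in> H2 \<Longrightarrow> y \<in> H1 \<Longrightarrow> cinner x y = 0"
  using orthogonal[of y x] cinner_cnj_commute[of x y] by simp

definition proj1 :: "'a \<Rightarrow> 'a" where "proj1 x = (SOME u. u \<in> H1 \<and> x - u \<in> H2)"
definition proj2 :: "'a \<Rightarrow> 'a" where "proj2 x = x - proj1 x"

lemma proj1: "proj1 x \<in> H1 \<and> x - proj1 x \<in> H2"
proof -
  obtain u v where "u \<in> H1" "v \<in> H2" "x = u + v" using sum_eq_UNIV by blast
  hence "u \<in> H1 \<and> x - u \<in> H2" by simp
  thus ?thesis unfolding proj1_def by (rule someI)
qed

lemma proj1_in: "proj1 x \<in> H1" using proj1 by blast
lemma proj2_in: "proj2 x \<in> H2" using proj1 unfolding proj2_def by blast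
lemma proj1_add_proj2: "proj1 x + proj2 x = x" unfolding proj2_def by simp

lemma proj1_unique:
  assumes "u \<in> H1" "x - u \<in> H2" shows "proj1 x = u"
proof -
  have "proj1 x - u \<in> H1" by (intro csubspace_diff csubspace1 proj1_in assms(1))
  moreover have "proj1 x - u = (x - u) - (x - proj1 x)" by simp
  hence "proj1 x - u \<in> H2" using csubspace_diff[OF csubspace2 assms(2)] proj1 by metis
  ultimately have "cinner (proj1 x - u) (proj1 x - u) = 0" by (rule orthogonal)
  thus ?thesis by simp
qed

lemma proj1_H1: "x \<in> H1 \<Longrightarrow> proj1 x = x"
  by (rule proj1_unique) (simp_all add: csubspace_0[OF csubspace2])

lemma proj2_H2: "x \<in> H2 \<Longrightarrow> proj2 x = x"
  using proj1_unique[of 0 x] by (simp add: proj2_def csubspace_0[OF csubspace1])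

lemma norm_square_proj: "(norm x)\<^sup>2 = (norm (proj1 x))\<^sup>2 + (norm (proj2 x))\<^sup>2"
  using norm_add_square_orthogonal[OF orthogonal[OF proj1_in proj2_in], of x x]
  by (simp add: proj1_add_proj2)

lemma norm_proj1_le: "norm (proj1 x) \<le> norm x"
  by (rule power2_le_imp_le) (use norm_square_proj[of x] zero_le_power2[of "norm (proj2 x)"] norm_ge_zero[of x] in linarith)+

lemma norm_proj2_le: "norm (proj2 x) \<le> norm x"
  by (rule power2_le_imp_le) (use norm_square_proj[of x] zero_le_power2[of "norm (proj1 x)"] norm_ge_zero[of x] in linarith)+

lemma proj1_commute:
  assumes B: "bounded_clinear B" and BH1: "B ` H1 \<subseteq> H1" and BH2: "B ` H2 \<subseteq> H2"
  shows "B (proj1 x) = proj1 (B x)"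
proof -
  have "B x - B (proj1 x) = B (proj2 x)" by (simp add: proj2_def bounded_clinear_diff[OF B])
  thus ?thesis using BH1 BH2 proj1_in proj2_in by (intro proj1_unique[symmetric]) auto
qed

lemma proj2_commute:
  "bounded_clinear B \<Longrightarrow> B ` H1 \<subseteq> H1 \<Longrightarrow> B ` H2 \<subseteq> H2 \<Longrightarrow> B (proj2 x) = proj2 (B x)"
  using proj1_commute[of B x] by (simp add: proj2_def bounded_clinear_diff)

lemma bounded_clinear_proj1: "bounded_clinear proj1"
proof (rule bounded_clinearI[where K=1])
  show "proj1 (x + y) = proj1 x + proj1 y" for x y
  proof (rule proj1_unique)
    have "x + y - (proj1 x + proj1 y) = (x - proj1 x) + (y - proj1 y)" by simp
    thus "x + y - (proj1 x + proj1 y) \<in> H2" using csubspace_add[OF csubspace2] proj1 by metis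
  qed (intro csubspace_add csubspace1 proj1_in)
  show "proj1 (scaleC c x) = scaleC c (proj1 x)" for c x
  proof (rule proj1_unique)
    have "scaleC c x - scaleC c (proj1 x) = scaleC c (x - proj1 x)" by (simp add: scaleC_diff_right)
    thus "scaleC c x - scaleC c (proj1 x) \<in> H2" using csubspace_scaleC[OF csubspace2] proj1 by metis
  qed (intro csubspace_scaleC csubspace1 proj1_in)
qed (simp add: norm_proj1_le)

lemma bounded_clinear_proj2: "bounded_clinear proj2"
  unfolding proj2_def[abs_def] by (rule bounded_clinear_diff_op[OF bounded_clinear_ident bounded_clinear_proj1])

lemma hermitian_proj1: "hermitian proj1"
  unfolding hermitian_def
proof (intro allI)
  fix x y
  have "cinner (proj1 x) y = cinner (proj1 x) (proj1 y + proj2 y)" by (simp add: proj1_add_proj2)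
  also have "\<dots> = cinner (proj1 x) (proj1 y)"
    by (simp add: cinner_add_right orthogonal[OF proj1_in proj2_in])
  also have "\<dots> = cinner (proj1 x + proj2 x) (proj1 y)"
    by (simp add: cinner_add_left orthogonal'[OF proj2_in proj1_in])
  finally show "cinner (proj1 x) y = cinner x (proj1 y)" by (simp add: proj1_add_proj2)
qed

lemma hermitian_proj2: "hermitian proj2"
  using hermitian_proj1 unfolding hermitian_def proj2_def by (simp add: cinner_diff_left cinner_diff_right)

end

locale equivalent_irreducible_sum = orthogonal_sum H1 H2 for H1 H2 :: "'a::chilbert set" +
  fixes G :: "('g, 'c) monoid_scheme" and V :: "'g \<Rightarrow> 'a \<Rightarrow> 'a" and W :: "'a \<Rightarrow> 'a"
  assumes V_bounded: "\<And>g. g \<in> carrier G \<Longrightarrow> bounded_clinear (V g)"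
    and irreducible1: "irreducible_subrep G V H1" and irreducible2: "irreducible_subrep G V H2"
    and W_bij: "bij_betw W H1 H2" and W_linear: "clinear_on H1 W"
    and W_isometric: "\<And>x y. x \<in> H1 \<Longrightarrow> y \<in> H1 \<Longrightarrow> cinner (W x) (W y) = cinner x y"
    and W_intertwines: "\<And>g x. g \<in> carrier G \<Longrightarrow> x \<in> H1 \<Longrightarrow> W (V g x) = V g (W x)"
begin

lemma V_H1: "g \<in> carrier G \<Longrightarrow> V g ` H1 \<subseteq> H1"
  using irreducible1 unfolding irreducible_subrep_def rep_invariant_def by blast

lemma V_H2: "g \<in> carrier G \<Longrightarrow> V g ` H2 \<subseteq> H2"
  using irreducible2 unfolding irreducible_subrep_def rep_invariant_def by blast

lemma V_proj1: "g \<in> carrier G \<Longrightarrow> V g (proj1 x) = proj1 (V g x)"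
  by (rule proj1_commute[OF V_bounded V_H1 V_H2])

lemma V_proj2: "g \<in> carrier G \<Longrightarrow> V g (proj2 x) = proj2 (V g x)"
  by (rule proj2_commute[OF V_bounded V_H1 V_H2])

definition W_inv :: "'a \<Rightarrow> 'a" where "W_inv = inv_into H1 W"

lemma W_in: "u \<in> H1 \<Longrightarrow> W u \<in> H2" using W_bij bij_betwE by blast
lemma W_inv_in: "v \<in> H2 \<Longrightarrow> W_inv v \<in> H1"
  unfolding W_inv_def using bij_betw_inv_into[OF W_bij] bij_betwE by blast
lemma W_W_inv: "v \<in> H2 \<Longrightarrow> W (W_inv v) = v"
  unfolding W_inv_def by (rule bij_betw_inv_into_right[OF W_bij])
lemma W_inv_W: "u \<in> H1 \<Longrightarrow> W_inv (W u) = u"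
  unfolding W_inv_def by (rule bij_betw_inv_into_left[OF W_bij])
lemma W_add: "u \<in> H1 \<Longrightarrow> v \<in> H1 \<Longrightarrow> W (u + v) = W u + W v"
  using W_linear unfolding clinear_on_def by blast
lemma W_scaleC: "u \<in> H1 \<Longrightarrow> W (scaleC c u) = scaleC c (W u)"
  using W_linear unfolding clinear_on_def by blast
lemma norm_W: "u \<in> H1 \<Longrightarrow> norm (W u) = norm u"
  using W_isometric[of u u] by (simp add: norm_eq_sqrt_cinner)

definition transfer :: "'a \<Rightarrow> 'a" where "transfer x = W (proj1 x)"
definition transfer_back :: "'a \<Rightarrow> 'a" where "transfer_back x = W_inv (proj2 x)"

lemma bounded_clinear_transfer: "bounded_clinear transfer"
proof (rule bounded_clinearI[where K=1])
  fix x y c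
  show "transfer (x + y) = transfer x + transfer y"
    unfolding transfer_def by (simp add: bounded_clinear_add[OF bounded_clinear_proj1] W_add proj1_in)
  show "transfer (scaleC c x) = scaleC c (transfer x)"
    unfolding transfer_def by (simp add: bounded_clinear_scaleC[OF bounded_clinear_proj1] W_scaleC proj1_in)
  show "norm (transfer x) \<le> norm x * 1"
    unfolding transfer_def using norm_W[OF proj1_in] norm_proj1_le by simp
qed

lemma bounded_clinear_transfer_back: "bounded_clinear transfer_back"
proof (rule bounded_clinearI[where K=1])
  fix x y c
  show "transfer_back (x + y) = transfer_back x + transfer_back y"
    using W_inv_W[OF csubspace_add[OF csubspace1 W_inv_in[OF proj2_in] W_inv_in[OF proj2_in]]]
    by (simp add: transfer_back_def bounded_clinear_add[OF bounded_clinear_proj2] W_add W_inv_in W_W_inv proj2_in)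
  show "transfer_back (scaleC c x) = scaleC c (transfer_back x)"
    using W_inv_W[OF csubspace_scaleC[OF csubspace1 W_inv_in[OF proj2_in]]]
    by (simp add: transfer_back_def bounded_clinear_scaleC[OF bounded_clinear_proj2] W_scaleC W_inv_in W_W_inv
        proj2_in)
  show "norm (transfer_back x) \<le> norm x * 1"
    using norm_W[OF W_inv_in[OF proj2_in]] norm_proj2_le by (simp add: transfer_back_def W_W_inv proj2_in)
qed

lemma transfer_commute: "g \<in> carrier G \<Longrightarrow> transfer (V g x) = V g (transfer x)"
  unfolding transfer_def by (simp add: V_proj1[symmetric] W_intertwines proj1_in)

lemma transfer_back_commute: "g \<in> carrier G \<Longrightarrow> transfer_back (V g x) = V g (transfer_back x)"
  using W_inv_W[OF V_H1[THEN subsetD, OF _ imageI, OF _ W_inv_in[OF proj2_in]]]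
    W_intertwines[OF _ W_inv_in[OF proj2_in]]
  by (simp add: transfer_back_def V_proj2[symmetric] W_W_inv proj2_in)

lemma cinner_transfer: "cinner (transfer x) y = cinner x (transfer_back y)"
proof -
  have "cinner (transfer x) y = cinner (transfer x) (proj2 y)"
    using orthogonal'[OF W_in[OF proj1_in] proj1_in, of x y] proj1_add_proj2[of y]
    by (metis add.left_neutral cinner_add_right transfer_def)
  also have "\<dots> = cinner (proj1 x) (transfer_back y)"
    by (simp add: transfer_def transfer_back_def W_isometric[symmetric] proj1_in W_inv_in proj2_in W_W_inv)
  also have "\<dots> = cinner x (transfer_back y)"
    using orthogonal'[OF proj2_in W_inv_in[OF proj2_in], of x y] proj1_add_proj2[of x]
    by (metis add.right_neutral cinner_add_left transfer_back_def)
  finally show ?thesis .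
qed

lemma cinner_transfer_back: "cinner (transfer_back x) y = cinner x (transfer y)"
  using cinner_transfer[of y x] cinner_cnj_commute[of "transfer_back x" y] cinner_cnj_commute[of x "transfer y"]
  by simp

lemma commutant_off_diagonal:
  assumes A: "bounded_clinear A" and hA: "hermitian A"
    and comm: "\<And>g x. g \<in> carrier G \<Longrightarrow> A (V g x) = V g (A x)"
  obtains \<beta> where "\<And>u. u \<in> H1 \<Longrightarrow> transfer_back (A u) = scaleC \<beta> u"
    "\<And>u. u \<in> H1 \<Longrightarrow> proj1 (A (W u)) = scaleC (cnj \<beta>) u"
proof -
  let ?X = "\<lambda>x. transfer_back (A (proj1 x))" and ?X' = "\<lambda>x. proj1 (A (transfer x))"
  have "\<exists>\<beta>. \<forall>u\<in>H1. ?X u = scaleC \<beta> u \<and> ?X' u = scaleC (cnj \<beta>) u"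
  proof (rule schur_adjoint_pair[OF irreducible1])
    show "bounded_clinear (V g)" if "g \<in> carrier G" for g using that by (rule V_bounded)
    show "bounded_clinear ?X"
      by (intro bounded_clinear_compose[OF bounded_clinear_transfer_back] bounded_clinear_compose[OF A]
          bounded_clinear_proj1)
    show "bounded_clinear ?X'"
      by (intro bounded_clinear_compose[OF bounded_clinear_proj1] bounded_clinear_compose[OF A]
          bounded_clinear_transfer)
    show "cinner (?X x) y = cinner x (?X' y)" for x y
      by (simp only: cinner_transfer_back hermitianD[OF hA] hermitianD[OF hermitian_proj1])
    show "?X (V g x) = V g (?X x)" "?X' (V g x) = V g (?X' x)" if "g \<in> carrier G" for g x
      using that by (simp_all add: V_proj1[symmetric] comm transfer_back_commute transfer_commute)
    show "?X ` H1 \<subseteq> H1" using W_inv_in[OF proj2_in] by (auto simp: transfer_back_def)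
    show "?X' ` H1 \<subseteq> H1" using proj1_in by blast
  qed
  thus ?thesis using that by (auto simp: proj1_H1 transfer_def)
qed

lemma commutant_action:
  assumes A: "bounded_clinear A" and hA: "hermitian A"
    and comm: "\<And>g x. g \<in> carrier G \<Longrightarrow> A (V g x) = V g (A x)"
  obtains \<alpha> \<beta> \<delta> where "\<And>u. u \<in> H1 \<Longrightarrow> A u = scaleC \<alpha> u + scaleC \<beta> (W u)"
    "\<And>u. u \<in> H1 \<Longrightarrow> A (W u) = scaleC (cnj \<beta>) u + scaleC \<delta> (W u)"
proof -
  obtain a where a: "\<And>u. u \<in> H1 \<Longrightarrow> proj1 (A u) = a *\<^sub>R u"
    using schur_compression[OF irreducible1 V_bounded bounded_clinear_proj1 hermitian_proj1 proj1_in proj1_H1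
        V_proj1[symmetric] A hA comm] by blast
  obtain d where d: "\<And>v. v \<in> H2 \<Longrightarrow> proj2 (A v) = d *\<^sub>R v"
    using schur_compression[OF irreducible2 V_bounded bounded_clinear_proj2 hermitian_proj2 proj2_in proj2_H2
        V_proj2[symmetric] A hA comm] by blast
  obtain \<beta> where \<beta>: "\<And>u. u \<in> H1 \<Longrightarrow> transfer_back (A u) = scaleC \<beta> u"
    "\<And>u. u \<in> H1 \<Longrightarrow> proj1 (A (W u)) = scaleC (cnj \<beta>) u"
    using commutant_off_diagonal[OF A hA comm] by blast
  show ?thesis
  proof
    fix u assume u: "u \<in> H1"
    have "proj2 (A u) = W (transfer_back (A u))" by (simp add: transfer_back_def W_W_inv proj2_in)
    thus "A u = scaleC (of_real a) u + scaleC \<beta> (W u)"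
      using proj1_add_proj2[of "A u"] a[OF u] \<beta>(1)[OF u] W_scaleC[OF u] by (simp add: scaleR_scaleC)
    show "A (W u) = scaleC (cnj \<beta>) u + scaleC (of_real d) (W u)"
      using proj1_add_proj2[of "A (W u)"] d[OF W_in[OF u]] \<beta>(2)[OF u] by (simp add: scaleR_scaleC)
  qed
qed

text \<open>On each \<open>span {u, W u}\<close>, \<open>A\<close> acts by the matrix \<open>[[\<alpha>, cnj \<beta>], [\<beta>, \<delta>]]\<close>, which
satisfies its characteristic equation.\<close>
lemma commutant_quadratic:
  assumes A: "bounded_clinear A" and hA: "hermitian A"
    and comm: "\<And>g x. g \<in> carrier G \<Longrightarrow> A (V g x) = V g (A x)"
  obtains s q where "\<And>x. A (A x) = scaleC s (A x) - scaleC q x"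
proof -
  obtain \<alpha> \<beta> \<delta> where F1: "\<And>u. u \<in> H1 \<Longrightarrow> A u = scaleC \<alpha> u + scaleC \<beta> (W u)"
    and F2: "\<And>u. u \<in> H1 \<Longrightarrow> A (W u) = scaleC (cnj \<beta>) u + scaleC \<delta> (W u)"
    using commutant_action[OF A hA comm] by blast
  define comb where "comb u a b = scaleC a u + scaleC b (W u)" for u a b
  define s where "s = \<alpha> + \<delta>"
  define q where "q = \<alpha> * \<delta> - \<beta> * cnj \<beta>"
  have A_comb: "A (comb u a b) = comb u (a * \<alpha> + b * cnj \<beta>) (a * \<beta> + b * \<delta>)" if u: "u \<in> H1" for u a b
    unfolding comb_def
    by (simp add: bounded_clinear_add[OF A] bounded_clinear_scaleC[OF A] F1[OF u] F2[OF u]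
        scaleC_add_right scaleC_scaleC scaleC_add_left add_ac mult_ac)
  have comb_diff: "scaleC s (comb u a b) - scaleC q (comb u a' b') = comb u (s * a - q * a') (s * b - q * b')"
    for u a b a' b'
    unfolding comb_def by (simp add: scaleC_add_right scaleC_scaleC scaleC_diff_left algebra_simps)
  have quadratic: "A (A (comb u a b)) = scaleC s (A (comb u a b)) - scaleC q (comb u a b)"
    if u: "u \<in> H1" for u a b
    unfolding A_comb[OF u] comb_diff by (rule arg_cong2[where f="comb u"]) (simp_all add: s_def q_def algebra_simps)
  have additive: "A (A (y + z)) = scaleC s (A (y + z)) - scaleC q (y + z)"
    if "A (A y) = scaleC s (A y) - scaleC q y" "A (A z) = scaleC s (A z) - scaleC q z" for y z
    using that by (simp add: bounded_clinear_add[OF A] scaleC_add_right)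
  show ?thesis
  proof
    fix x
    let ?u = "proj1 x" and ?v = "W_inv (proj2 x)"
    have "comb ?u 1 0 + comb ?v 0 1 = x"
      using proj1_add_proj2[of x] by (simp add: comb_def scaleC_one W_W_inv proj2_in)
    thus "A (A x) = scaleC s (A x) - scaleC q x"
      using additive[OF quadratic[OF proj1_in[of x], of 1 0] quadratic[OF W_inv_in[OF proj2_in[of x]], of 0 1]]
      by (simp only:)
  qed
qed

end

section \<open>Boundedness\<close>

lemma quadratic_injective_bounded_below:
  fixes A :: "'a::chilbert \<Rightarrow> 'a"
  assumes A: "bounded_clinear A" and inj: "\<And>y. A y = 0 \<Longrightarrow> y = 0"
    and quadratic: "\<And>x. A (A x) = scaleC s (A x) - scaleC q x"
  obtains K where "K \<ge> 0" "\<And>x. norm x \<le> K * norm (A x)"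
proof -
  obtain M where M: "M > 0" "\<And>y. norm (A y) \<le> norm y * M" using bounded_clinear_pos_bound[OF A] by blast
  have "\<exists>K. \<forall>x. norm x \<le> K * norm (A x)"
  proof (cases "q = 0")
    case False
    have "norm x \<le> ((cmod s + M) / cmod q) * norm (A x)" for x
    proof -
      have "scaleC q x = scaleC s (A x) - A (A x)" using quadratic[of x] by (simp add: algebra_simps)
      hence "cmod q * norm x = norm (scaleC s (A x) - A (A x))" by (simp add: norm_scaleC[symmetric])
      also have "\<dots> \<le> cmod s * norm (A x) + norm (A x) * M"
        using norm_triangle_ineq4[of "scaleC s (A x)" "A (A x)"] M(2)[of "A x"] by (simp add: norm_scaleC)
      finally show ?thesis using False by (simp add: field_simps mult.commute)
    qed
    thus ?thesis by blast
  next
    case True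
    \<comment> \<open>then \<open>A (A x - s x) = 0\<close>, so \<open>A = s\<close>; if \<open>s = 0\<close> the space is trivial and \<open>1 / 0 = 0\<close> is harmless\<close>
    have "A x = scaleC s x" for x
      using inj[of "A x - scaleC s x"] quadratic[of x] True
      by (simp add: bounded_clinear_diff[OF A] bounded_clinear_scaleC[OF A])
    hence "norm x \<le> (1 / cmod s) * norm (A x)" for x
      using inj[of x] by (cases "s = 0") (simp_all add: norm_scaleC)
    thus ?thesis by blast
  qed
  then obtain K where "\<And>x. norm x \<le> K * norm (A x)" by blast
  hence "norm x \<le> max K 0 * norm (A x)" for x
    by (rule order_trans) (simp add: mult_right_mono)
  thus ?thesis using that[of "max K 0"] by simp
qed

context selfadjoint_operator
begin

lemma inverse_one_plus_square_commute:
  assumes B: "bounded_clinear B" and BD: "\<And>x. x \<in> D \<Longrightarrow> B x \<in> D"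
    and BT: "\<And>x. x \<in> D \<Longrightarrow> T (B x) = B (T x)"
  shows "B (inverse_one_plus_square y) = inverse_one_plus_square (B y)"
  unfolding inverse_one_plus_square_def by (simp add: resolvent_commute[OF _ B BD BT])

lemma bounded_if_inverse_one_plus_square_bounded_below:
  assumes K: "K \<ge> 0" "\<And>y. norm y \<le> K * norm (inverse_one_plus_square y)"
  shows "bounded_op D T"
  unfolding bounded_op_def
proof (intro exI ballI)
  fix x assume x: "x \<in> D"
  let ?y = "T x + scaleC (\<i> * of_real 1) x"
  have "norm (T x) \<le> norm ?y" by (rule norm_le_norm_shift[OF x])
  also have "\<dots> \<le> K * norm (inverse_one_plus_square ?y)" by (rule K(2))
  also have "\<dots> \<le> K * norm (resolvent 1 ?y)"
    by (intro mult_left_mono norm_inverse_one_plus_square_le K(1))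
  also have "resolvent 1 ?y = x" by (rule resolvent_shift[OF _ x]) simp
  finally show "norm (T x) \<le> K * norm x" .
qed

end

lemma unitary_rep_bounded_clinear:
  assumes "unitary_rep G V" "g \<in> carrier G"
  shows "bounded_clinear (V g)"
proof -
  have U: "unitary_op (V g)" using assms unfolding unitary_rep_def by blast
  show ?thesis
  proof (rule bounded_clinearI[where K=1])
    show "V g (x + y) = V g x + V g y" "V g (scaleC c x) = scaleC c (V g x)" for x y c
      using U unfolding unitary_op_def clinear_on_def by blast+
    show "norm (V g x) \<le> norm x * 1" for x
      using U unfolding unitary_op_def by (simp add: norm_eq_sqrt_cinner)
  qed
qed

lemma orth_decomposition_orthogonal_sum:
  assumes "orth_decomposition G V H1 H2"
  shows "orthogonal_sum H1 H2"
proof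
  have "x \<in> {u + v | u v. u \<in> H1 \<and> v \<in> H2}" for x
    using assms unfolding orth_decomposition_def by simp
  thus "\<exists>u v. u \<in> H1 \<and> v \<in> H2 \<and> x = u + v" for x by blast
qed (use assms in \<open>simp_all add: orth_decomposition_def\<close>)

theorem proposition5p9:
  fixes G :: "('g, 'c) monoid_scheme"
    and V :: "'g \<Rightarrow> 'h::chilbert \<Rightarrow> 'h"
    and H1 H2 D :: "'h set"
    and T :: "'h \<Rightarrow> 'h"
  assumes "group G"
    and "separable_space (euclidean :: 'h topology)"
    and "unitary_rep G V"
    and "orth_decomposition G V H1 H2"
    and "irreducible_subrep G V H1"
    and "irreducible_subrep G V H2"
    and "equivalent_subreps G V H1 H2"
    and "densely_defined D T"
    and "self_adjoint D T"
    and "G_invariant G V D T"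
  shows "bounded_op D T"
proof -
  interpret T: selfadjoint_operator D T by unfold_locales (fact assms)+
  obtain W where W: "bij_betw W H1 H2" "clinear_on H1 W"
    "\<And>x y. x \<in> H1 \<Longrightarrow> y \<in> H1 \<Longrightarrow> cinner (W x) (W y) = cinner x y"
    "\<And>g x. g \<in> carrier G \<Longrightarrow> x \<in> H1 \<Longrightarrow> W (V g x) = V g (W x)"
    using assms(7) unfolding equivalent_subreps_def by blast
  interpret H: equivalent_irreducible_sum H1 H2 G V W
    by (intro equivalent_irreducible_sum.intro equivalent_irreducible_sum_axioms.intro
        orth_decomposition_orthogonal_sum[OF assms(4)] unitary_rep_bounded_clinear[OF assms(3)]
        assms(5,6) W)
  let ?A = "T.inverse_one_plus_square"
  have "?A (V g x) = V g (?A x)" if "g \<in> carrier G" for g x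
    using assms(10) that unfolding G_invariant_def
    by (subst T.inverse_one_plus_square_commute[OF H.V_bounded[OF that]]) auto
  then obtain s q where "\<And>x. ?A (?A x) = scaleC s (?A x) - scaleC q x"
    using H.commutant_quadratic[OF T.bounded_clinear_inverse_one_plus_square
        T.hermitian_inverse_one_plus_square] by blast
  then obtain K where "K \<ge> 0" "\<And>x. norm x \<le> K * norm (?A x)"
    using quadratic_injective_bounded_below[OF T.bounded_clinear_inverse_one_plus_square
        T.inverse_one_plus_square_eq_0] by blast
  thus ?thesis by (rule T.bounded_if_inverse_one_plus_square_bounded_below)
qed

end
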